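(* Let $A$ be a finite simple group and $G$ a second countable, totally disconnected, locally compact group. The following are equivalent: (1) $A$ belongs to the local simple content of $G$; (2) there exists a compact open subgroup $U\le G$ such that $A$ is a composition factor of $U$ with infinite multiplicity; (3) for every compact open subgroup $U\le G$, $A$ is a composition factor of $U$ with infinite multiplicity.
   Context: A composition series of a second countable profinite group $U$ is a countable descending chain $U=U_0\triangleright U_1\triangleright\cdots$ of closed subgroups, each normal in the previous one, with trivial intersection and all quotients $U_{i-1}/U_i$ simple (hence finite). Such series exist, and any two have the same composition factors up to isomorphism with the same multiplicities (in $\mathbb{N}\cup\{\infty\}$); a finite simple group is a composition factor of $U$ with multiplicity $n$ if it occurs $n$ times as a quotient in one (equivalently every) composition series. The local simple content of a second countable, totally disconnected, locally compact group $G$ is the set of isomorphism classes of finite simple groups that are composition factors of every compact open subgroup of $G$. *)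

theory Defs
  imports "HOL-Analysis.Analysis" "HOL-Algebra.Algebra"
begin

definition topological_group :: "'a monoid \<Rightarrow> 'a topology \<Rightarrow> bool" where
  "topological_group G T \<longleftrightarrow> group G \<and> topspace T = carrier G
     \<and> continuous_map (prod_topology T T) T (\<lambda>p. fst p \<otimes>\<^bsub>G\<^esub> snd p)
     \<and> continuous_map T T (\<lambda>x. inv\<^bsub>G\<^esub> x)"

definition totally_disconnected_space :: "'a topology \<Rightarrow> bool" where
  "totally_disconnected_space T \<longleftrightarrow>
     (\<forall>x\<in>topspace T. connected_component_of_set T x = {x})"

definition sc_tdlc_group :: "'a monoid \<Rightarrow> 'a topology \<Rightarrow> bool" where
  "sc_tdlc_group G T \<longleftrightarrow> topological_group G T \<and> second_countable T
     \<and> totally_disconnected_space T \<and> locally_compact_space T"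

definition compact_open_subgroup :: "'a monoid \<Rightarrow> 'a topology \<Rightarrow> 'a set \<Rightarrow> bool" where
  "compact_open_subgroup G T U \<longleftrightarrow> subgroup U G \<and> compactin T U \<and> openin T U"

text \<open>Once the chain reaches the trivial group it stays trivial,
  which covers finite composition series (for finite U).\<close>
definition composition_series ::
    "'a monoid \<Rightarrow> 'a topology \<Rightarrow> 'a set \<Rightarrow> (nat \<Rightarrow> 'a set) \<Rightarrow> bool" where
  "composition_series G T U S \<longleftrightarrow>
     S 0 = U
     \<and> (\<forall>i. subgroup (S i) G \<and> closedin T (S i))
     \<and> (\<forall>i. S (Suc i) \<lhd> G\<lparr>carrier := S i\<rparr>)
     \<and> (\<Inter>i. S i) = {\<one>\<^bsub>G\<^esub>}
     \<and> (\<forall>i. S i \<noteq> {\<one>\<^bsub>G\<^esub>} \<longrightarrow> simple_group (G\<lparr>carrier := S i\<rparr> Mod S (Suc i)))"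

definition factor_indices ::
    "'a monoid \<Rightarrow> (nat \<Rightarrow> 'a set) \<Rightarrow> 'b monoid \<Rightarrow> nat set" where
  "factor_indices G S A =
     {i. S i \<noteq> {\<one>\<^bsub>G\<^esub>} \<and> (G\<lparr>carrier := S i\<rparr> Mod S (Suc i)) \<cong> A}"

text \<open>A is a composition factor of U (multiplicity at least one), resp. with infinite
  multiplicity, measured in a composition series (by the Jordan-Hoelder type
  invariance recalled in the paper, this does not depend on the series).\<close>
definition composition_factor ::
    "'a monoid \<Rightarrow> 'a topology \<Rightarrow> 'a set \<Rightarrow> 'b monoid \<Rightarrow> bool" where
  "composition_factor G T U A \<longleftrightarrow>
     (\<exists>S. composition_series G T U S \<and> factor_indices G S A \<noteq> {})"

definition composition_factor_inf_mult ::
    "'a monoid \<Rightarrow> 'a topology \<Rightarrow> 'a set \<Rightarrow> 'b monoid \<Rightarrow> bool" where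
  "composition_factor_inf_mult G T U A \<longleftrightarrow>
     (\<exists>S. composition_series G T U S \<and> infinite (factor_indices G S A))"

definition in_local_simple_content :: "'a monoid \<Rightarrow> 'a topology \<Rightarrow> 'b monoid \<Rightarrow> bool" where
  "in_local_simple_content G T A \<longleftrightarrow>
     (\<forall>U. compact_open_subgroup G T U \<longrightarrow> composition_factor G T U A)"

end

theory Submission
  imports Defs
begin

(*
  (1) implies (3): for a compact open U, choose compact open subgroups U = W 0 > W 1 > ...
  shrinking to the identity along a countable neighbourhood basis of 1. By (1) the finite
  stretch W k > ... > W (Suc k) can be cut out of a composition series of W k so that it
  already contains the factor A; concatenating these stretches gives a composition series
  of U in which A occurs infinitely often.

  (2) implies (1): let S be a series of U with A occurring infinitely often and V any compact
  open subgroup. Some S N lies in V and contains an open normal subgroup K of V. The map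
  i \<mapsto> S i <#> K is decreasing with values in unions of the finitely many cosets of K in V,
  so only finitely many proper steps S i > S (Suc i) are invisible in K. At any other
  A-step the second isomorphism theorem gives (S i \<inter> K) / (S (Suc i) \<inter> K) \<cong> A, and refining
  V > K > S i \<inter> K > S (Suc i) \<inter> K to a composition series exhibits A as a factor of V.
  (3) implies (2) since compact open subgroups exist by van Dantzig's theorem.
*)

no_notation (ASCII) subset_mset (infix \<open><#\<close> 50)

lemma finite_image_if_factors:
  assumes "finite (f ` A)" and "\<And>x y. x \<in> A \<Longrightarrow> y \<in> A \<Longrightarrow> f x = f y \<Longrightarrow> g x = g y"
  shows "finite (g ` A)"
proof -
  have "g x = g (inv_into A f (f x))" if "x \<in> A" for x
    using assms(2)[OF that inv_into_into[of "f x" f A]] that by (simp add: f_inv_into_f)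
  then have "g ` A \<subseteq> (\<lambda>c. g (inv_into A f c)) ` (f ` A)"
    by blast
  then show ?thesis
    using assms(1) by (meson finite_imageI finite_subset)
qed

lemma strict_mono_segment_exists:
  fixes p :: "nat \<Rightarrow> nat"
  assumes "strict_mono p" "p 0 = 0"
  shows "\<exists>k. p k \<le> n \<and> n < p (Suc k)"
proof (induction n)
  case 0
  then show ?case
    using assms strict_monoD[OF assms(1), of 0 1] by auto
next
  case (Suc n)
  then obtain k where k: "p k \<le> n" "n < p (Suc k)"
    by blast
  show ?case
  proof (cases "Suc n < p (Suc k)")
    case True
    then show ?thesis using k by (intro exI[of _ k]) auto
  next
    case False
    then show ?thesis
      using k strict_monoD[OF assms(1), of "Suc k" "Suc (Suc k)"] by (intro exI[of _ "Suc k"]) auto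
  qed
qed

lemma strict_mono_segment_unique:
  fixes p :: "nat \<Rightarrow> nat"
  assumes "strict_mono p" "p k \<le> n" "n < p (Suc k)" "p k' \<le> n" "n < p (Suc k')"
  shows "k = k'"
proof -
  have "\<not> Suc k \<le> k'" "\<not> Suc k' \<le> k"
    using assms strict_mono_less_eq[OF assms(1)] by (metis le_trans not_le)+
  then show ?thesis by simp
qed

lemma concat_sequences:
  fixes len :: "nat \<Rightarrow> nat" and ch :: "nat \<Rightarrow> nat \<Rightarrow> 'a"
  assumes len: "\<And>k. len k \<ge> 1" and ends: "\<And>k. ch k (len k) = ch (Suc k) 0"
  obtains S where "\<And>k j. j \<le> len k \<Longrightarrow> S ((\<Sum>i<k. len i) + j) = ch k j"
    and "\<And>n. \<exists>k j. j < len k \<and> S n = ch k j \<and> S (Suc n) = ch k (Suc j)"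
proof -
  define p where "p k = (\<Sum>i<k. len i)" for k
  have p_Suc: "p (Suc k) = p k + len k" for k
    unfolding p_def by simp
  have p_mono: "strict_mono p"
    using len by (intro strict_monoI_Suc) (simp add: p_Suc Suc_le_eq)
  have "p 0 = 0"
    unfolding p_def by simp
  define seg where "seg n = (THE k. p k \<le> n \<and> n < p (Suc k))" for n
  have "\<exists>!k. p k \<le> n \<and> n < p (Suc k)" for n
  proof (rule ex_ex1I)
    show "\<exists>k. p k \<le> n \<and> n < p (Suc k)"
      using strict_mono_segment_exists[OF p_mono \<open>p 0 = 0\<close>] .
    show "k = k'" if "p k \<le> n \<and> n < p (Suc k)" "p k' \<le> n \<and> n < p (Suc k')" for k k'
      using strict_mono_segment_unique[OF p_mono] that by blast
  qed
  then have seg: "p (seg n) \<le> n \<and> n < p (Suc (seg n))" for n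
    unfolding seg_def by (rule theI')
  define S where "S n = ch (seg n) (n - p (seg n))" for n
  have S_lt: "S (p k + j) = ch k j" if "j < len k" for k j
  proof -
    have "p k \<le> p k + j" "p k + j < p (Suc k)"
      using that p_Suc[of k] by simp_all
    then have "seg (p k + j) = k"
      using seg[of "p k + j"] strict_mono_segment_unique[OF p_mono] by blast
    then show ?thesis
      unfolding S_def by simp
  qed
  have S_le: "S (p k + j) = ch k j" if "j \<le> len k" for k j
  proof (cases "j < len k")
    case True
    then show ?thesis using S_lt by simp
  next
    case False
    then have "j = len k" "S (p k + j) = S (p (Suc k) + 0)"
      using that p_Suc by simp_all
    then show ?thesis
      using S_lt[of 0 "Suc k"] len[of "Suc k"] ends[of k] by simp
  qed
  have "\<exists>k j. j < len k \<and> S n = ch k j \<and> S (Suc n) = ch k (Suc j)" for n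
  proof (intro exI conjI)
    show "n - p (seg n) < len (seg n)"
      using seg[of n] p_Suc[of "seg n"] by linarith
    then show "S n = ch (seg n) (n - p (seg n))" "S (Suc n) = ch (seg n) (Suc (n - p (seg n)))"
      using S_le[of "Suc (n - p (seg n))" "seg n"] seg[of n] unfolding S_def by (simp_all add: Suc_diff_le)
  qed
  then show ?thesis
    using that S_le unfolding p_def by blast
qed

lemma t1_space_if_totally_disconnected:
  assumes "totally_disconnected_space Y"
  shows "t1_space Y"
  unfolding t1_space_closedin_singleton
proof
  fix x assume x: "x \<in> topspace Y"
  have "connectedin Y (Y closure_of {x})"
    using x by (simp add: connectedin_closure_of)
  then have "Y closure_of {x} \<subseteq> connected_component_of_set Y x"
    using x closure_of_subset[of "{x}" Y] by (intro connected_component_of_maximal) auto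
  then show "closedin Y {x}"
    using assms x unfolding totally_disconnected_space_def
    by (metis closure_of_subset_eq empty_subsetI insert_subset)
qed

lemma compactin_decreasing_imp_eventually_subset:
  assumes "compactin Y K" and "S 0 \<subseteq> K" and "decseq S" and "\<And>i. closedin Y (S i)"
    and "openin Y W" and "(\<Inter>i. S i) \<subseteq> W"
  obtains m where "S m \<subseteq> W"
proof -
  define \<U> where "\<U> = range (\<lambda>i. S i - W)"
  have "\<forall>C\<in>\<U>. closedin Y C"
    unfolding \<U>_def using assms(4,5) by blast
  moreover have "K \<inter> \<Inter>\<U> = {}"
    unfolding \<U>_def using assms(6) by blast
  ultimately obtain F where F: "finite F" "F \<subseteq> \<U>" "K \<inter> \<Inter>F = {}"
    using assms(1) unfolding compactin_fip by blast
  then obtain I where I: "finite I" "F = (\<lambda>i. S i - W) ` I"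
    unfolding \<U>_def by (meson finite_subset_image)
  define m where "m = Max (insert 0 I)"
  have "S m - W \<subseteq> S i - W" if "i \<in> I" for i
    using assms(3) I(1) that unfolding m_def by (simp add: Diff_mono decseqD)
  moreover have "S m \<subseteq> K"
    using assms(2,3) decseqD[of S 0 m] by auto
  ultimately have "S m - W \<subseteq> K \<inter> \<Inter>F"
    using I(2) by auto
  then show ?thesis
    using F(3) that by blast
qed

section \<open>Simple quotients, normal cores and cosets\<close>

lemma simple_group_finite_carrier: "simple_group Q \<Longrightarrow> finite (carrier Q)"
  using simple_group.order_gt_one[of Q] unfolding order_def by (metis card.infinite not_less_zero)

lemma normal_subset_carrier: "H \<lhd> G\<lparr>carrier := K\<rparr> \<Longrightarrow> H \<subseteq> K"
  by (metis normal_imp_subgroup partial_object.select_convs(1) partial_object.surjective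
      partial_object.update_convs(1) subgroup.subset)

lemma r_coset_carrier_update [simp]: "r_coset (G\<lparr>carrier := K\<rparr>) = r_coset G"
  by (intro ext) (simp add: r_coset_def)

lemma rcosets_carrier_update: "rcosets\<^bsub>G\<lparr>carrier := K\<rparr>\<^esub> H = (\<lambda>x. H #>\<^bsub>G\<^esub> x) ` K"
  unfolding RCOSETS_def by auto

definition normal_core :: "('a, 'b) monoid_scheme \<Rightarrow> 'a set \<Rightarrow> 'a set \<Rightarrow> 'a set" where
  "normal_core G U H = {g \<in> carrier G. \<forall>x\<in>U. inv\<^bsub>G\<^esub> x \<otimes>\<^bsub>G\<^esub> g \<otimes>\<^bsub>G\<^esub> x \<in> H}"

context group
begin

lemma inv_mult_cancel_left [simp]: "x \<in> carrier G \<Longrightarrow> h \<in> carrier G \<Longrightarrow> inv x \<otimes> (x \<otimes> h) = h"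
  by (simp add: m_assoc[symmetric])

lemma mult_inv_cancel_left [simp]: "x \<in> carrier G \<Longrightarrow> h \<in> carrier G \<Longrightarrow> x \<otimes> (inv x \<otimes> h) = h"
  by (simp add: m_assoc[symmetric])

lemma mult_inv_eq_one_iff:
  assumes "x \<in> carrier G" "y \<in> carrier G"
  shows "x \<otimes> inv y = \<one> \<longleftrightarrow> x = y"
proof
  assume "x \<otimes> inv y = \<one>"
  then have "x \<otimes> inv y \<otimes> y = y"
    using assms by simp
  then show "x = y"
    using assms by (simp add: m_assoc)
qed (use assms in simp)

lemma subgroup_of_subgroup:
  assumes "subgroup H (G\<lparr>carrier := K\<rparr>)" and "subgroup K G"
  shows "subgroup H G"
proof -
  have "group ((G\<lparr>carrier := K\<rparr>)\<lparr>carrier := H\<rparr>)"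
    using group.subgroup_imp_group[OF subgroup_imp_group[OF assms(2)] assms(1)] .
  moreover have "H \<subseteq> carrier G"
    using subgroup.subset[OF assms(1)] subgroup.subset[OF assms(2)] by simp
  ultimately show ?thesis
    using group_incl_imp_subgroup by simp
qed

lemma rcosets_eq_image: "rcosets H = (\<lambda>a. H #> a) ` carrier G"
  unfolding RCOSETS_def by auto

lemma union_rcosets_eq:
  assumes "subgroup Y G" "subgroup M G" "Y \<subseteq> M"
  shows "M = (\<Union>m\<in>M. Y #> m)"
proof
  show "M \<subseteq> (\<Union>m\<in>M. Y #> m)"
    using rcos_self[OF _ assms(1)] subgroup.subset[OF assms(2)] by blast
  show "(\<Union>m\<in>M. Y #> m) \<subseteq> M"
    using assms(3) subgroup.m_closed[OF assms(2)] unfolding r_coset_def by blast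
qed

lemma normal_between_simple_quotient:
  assumes N: "N \<lhd> G" and simple: "simple_group (G Mod N)" and M: "M \<lhd> G" and "N \<subseteq> M"
  shows "M = N \<or> M = carrier G"
proof -
  interpret N: normal N G by (rule N)
  interpret M: normal M G by (rule M)
  have M_rcosets: "rcosets\<^bsub>G\<lparr>carrier := M\<rparr>\<^esub> N = (\<lambda>m. N #> m) ` M"
    by (rule rcosets_carrier_update)
  have "rcosets\<^bsub>G\<lparr>carrier := M\<rparr>\<^esub> N \<lhd> G Mod N"
    using normality_factorization[OF N \<open>N \<subseteq> M\<close> M] .
  then consider "rcosets\<^bsub>G\<lparr>carrier := M\<rparr>\<^esub> N = {N}" | "rcosets\<^bsub>G\<lparr>carrier := M\<rparr>\<^esub> N = rcosets N"
    using simple_group.no_real_normal_subgroup[OF simple] by (auto simp: FactGroup_def)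
  then show ?thesis
  proof cases
    case 1
    have "M \<subseteq> N"
    proof
      fix m assume "m \<in> M"
      then have "N #> m = N" and "m \<in> N #> m"
        using 1 M_rcosets rcos_self[OF M.mem_carrier N.subgroup_axioms] by auto
      then show "m \<in> N" by simp
    qed
    then show ?thesis using \<open>N \<subseteq> M\<close> by auto
  next
    case 2
    have "carrier G \<subseteq> M"
    proof
      fix x assume x: "x \<in> carrier G"
      then have "N #> x \<in> (\<lambda>m. N #> m) ` M"
        using 2 M_rcosets unfolding RCOSETS_def by blast
      then obtain m where m: "m \<in> M" "x \<in> N #> m"
        using rcos_self[OF x N.subgroup_axioms] by auto
      then show "x \<in> M"
        using \<open>N \<subseteq> M\<close> M.m_closed unfolding r_coset_def by auto
    qed
    then show ?thesis using M.subset by auto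
  qed
qed

lemma simple_quotient_Int_normal:
  assumes Y: "Y \<lhd> G" and simple: "simple_group (G Mod Y)" and K: "K \<lhd> G" and "\<not> K \<subseteq> Y"
  shows "Y \<inter> K \<lhd> G\<lparr>carrier := K\<rparr>" and "G\<lparr>carrier := K\<rparr> Mod (Y \<inter> K) \<cong> G Mod Y"
proof -
  interpret SI: second_isomorphism_grp Y G K
    unfolding second_isomorphism_grp_def second_isomorphism_grp_axioms_def
    using Y normal_imp_subgroup[OF K] by auto
  show "Y \<inter> K \<lhd> G\<lparr>carrier := K\<rparr>"
    using SI.normal_subgrp_intersection_normal by (simp add: Int_commute)
  have "Y <#> K = Y \<or> Y <#> K = carrier G"
    using normal_between_simple_quotient[OF Y simple normal_subgroup_set_mult_closed[OF Y K]]
      SI.H_contained_in_set_mult by blast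
  then have "Y <#> K = carrier G"
    using SI.S_contained_in_set_mult \<open>\<not> K \<subseteq> Y\<close> by auto
  then show "G\<lparr>carrier := K\<rparr> Mod (Y \<inter> K) \<cong> G Mod Y"
    using is_isoI[OF SI.normal_intersection_quotient_isom] by simp
qed

lemma simple_quotient_if_maximal_normal:
  assumes M: "M \<lhd> G" and fin: "finite (rcosets M)" and proper: "M \<noteq> carrier G"
    and maximal: "\<And>N. N \<lhd> G \<Longrightarrow> M \<subseteq> N \<Longrightarrow> N \<noteq> carrier G \<Longrightarrow> N = M"
  shows "simple_group (G Mod M)"
  unfolding simple_group_def simple_group_axioms_def
proof (intro conjI allI impI)
  interpret M: normal M G by (rule M)
  show "group (G Mod M)" by (rule M.factorgroup_is_group)
  obtain x where x: "x \<in> carrier G" "x \<notin> M"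
    using proper M.subset by blast
  have "M #> x \<noteq> M #> \<one>"
    using rcos_self[OF x(1) M.subgroup_axioms] x(2) by (auto simp: coset_mult_one M.subset)
  moreover have "{M #> x, M #> \<one>} \<subseteq> rcosets M"
    unfolding rcosets_eq_image using x by auto
  ultimately have "card (rcosets M) \<ge> 2"
    using card_mono[OF fin] by (metis card_2_iff)
  then show "1 < order (G Mod M)"
    unfolding order_def FactGroup_def by simp
  fix N assume N: "N \<lhd> G Mod M"
  have "M \<in> N"
    using subgroup.one_closed[OF normal_imp_subgroup[OF N]] by simp
  then have "M \<subseteq> \<Union>N" by blast
  have N_eq: "N = rcosets\<^bsub>G\<lparr>carrier := \<Union>N\<rparr>\<^esub> M"
    using M.factgroup_subgroup_union_factor[OF normal_imp_subgroup[OF N]] .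
  show "N = carrier (G Mod M) \<or> N = {\<one>\<^bsub>G Mod M\<^esub>}"
  proof (cases "\<Union>N = carrier G")
    case True
    then show ?thesis using N_eq by (simp add: FactGroup_def)
  next
    case False
    then have "\<Union>N = M"
      using maximal[OF M.factgroup_subgroup_union_normal[OF N] \<open>M \<subseteq> \<Union>N\<close>] by simp
    then have "N = (\<lambda>m. M #> m) ` M"
      using N_eq by (simp add: rcosets_carrier_update)
    also have "\<dots> = (\<lambda>m. M) ` M"
      using M.rcos_const[OF is_group] by auto
    also have "\<dots> = {M}"
      using M.one_closed by blast
    finally show ?thesis by simp
  qed
qed

lemma finite_subgroups_above:
  assumes Y: "subgroup Y G" and fin: "finite (rcosets Y)"
  shows "finite {M. subgroup M G \<and> Y \<subseteq> M}"
proof -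
  have "{M. subgroup M G \<and> Y \<subseteq> M} \<subseteq> Union ` Pow (rcosets Y)"
  proof
    fix M assume "M \<in> {M. subgroup M G \<and> Y \<subseteq> M}"
    then have M: "subgroup M G" "Y \<subseteq> M"
      by auto
    then have "M = (\<Union>m\<in>M. Y #> m)"
      by (rule union_rcosets_eq[OF Y])
    moreover have "(\<lambda>m. Y #> m) ` M \<subseteq> rcosets Y"
      unfolding rcosets_eq_image using subgroup.subset[OF M(1)] by blast
    ultimately show "M \<in> Union ` Pow (rcosets Y)" by blast
  qed
  then show ?thesis
    using fin by (meson finite_Pow_iff finite_imageI finite_subset)
qed

lemma finite_rcosets_mono:
  assumes "subgroup Y G" "subgroup M G" "Y \<subseteq> M" "finite (rcosets Y)"
  shows "finite (rcosets M)"
  unfolding rcosets_eq_image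
proof (rule finite_image_if_factors[OF assms(4)[unfolded rcosets_eq_image]])
  fix x y assume "x \<in> carrier G" "y \<in> carrier G" "Y #> x = Y #> y"
  then have "x \<in> Y #> y"
    using rcos_self[OF \<open>x \<in> carrier G\<close> assms(1)] by simp
  then have "x \<in> M #> y"
    using assms(3) unfolding r_coset_def by blast
  then show "M #> x = M #> y"
    using repr_independence[OF _ \<open>y \<in> carrier G\<close> assms(2)] by simp
qed

lemma rcosets_in_proper_subgroup:
  assumes "subgroup Y G" "subgroup M G" "Y \<subseteq> M" "M \<noteq> carrier G"
  shows "rcosets\<^bsub>G\<lparr>carrier := M\<rparr>\<^esub> Y \<subset> rcosets Y"
proof
  show "rcosets\<^bsub>G\<lparr>carrier := M\<rparr>\<^esub> Y \<subseteq> rcosets Y"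
    unfolding rcosets_carrier_update rcosets_eq_image using subgroup.subset[OF assms(2)] by auto
  obtain x where x: "x \<in> carrier G" "x \<notin> M"
    using assms(4) subgroup.subset[OF assms(2)] by blast
  have "Y #> x \<notin> (\<lambda>m. Y #> m) ` M"
  proof
    assume "Y #> x \<in> (\<lambda>m. Y #> m) ` M"
    then obtain m where "m \<in> M" "x \<in> Y #> m"
      using rcos_self[OF x(1) assms(1)] by auto
    then show False
      using x(2) assms(3) subgroup.m_closed[OF assms(2)] unfolding r_coset_def by blast
  qed
  then show "rcosets\<^bsub>G\<lparr>carrier := M\<rparr>\<^esub> Y \<noteq> rcosets Y"
    unfolding rcosets_carrier_update rcosets_eq_image using x(1) by blast
qed

lemma exists_maximal_normal_above:
  assumes Y: "Y \<lhd> G" and fin: "finite (rcosets Y)" and proper: "Y \<noteq> carrier G"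
  obtains M where "M \<lhd> G" "Y \<subseteq> M" "simple_group (G Mod M)"
    "card (rcosets\<^bsub>G\<lparr>carrier := M\<rparr>\<^esub> Y) < card (rcosets Y)"
proof -
  define \<M> where "\<M> = {M. M \<lhd> G \<and> Y \<subseteq> M \<and> M \<noteq> carrier G}"
  have "\<M> \<subseteq> {M. subgroup M G \<and> Y \<subseteq> M}"
    unfolding \<M>_def using normal_imp_subgroup by blast
  then have "finite \<M>"
    using finite_subgroups_above[OF normal_imp_subgroup[OF Y] fin] finite_subset by blast
  moreover have "Y \<in> \<M>"
    unfolding \<M>_def using Y proper by auto
  ultimately obtain M where "M \<in> \<M>" and M_max: "\<forall>N\<in>\<M>. M \<subseteq> N \<longrightarrow> M = N"
    using finite_has_maximal by blast
  then have M: "M \<lhd> G" "Y \<subseteq> M" "M \<noteq> carrier G"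
    unfolding \<M>_def by auto
  have "simple_group (G Mod M)"
  proof (rule simple_quotient_if_maximal_normal[OF M(1) _ M(3)])
    show "finite (rcosets M)"
      using finite_rcosets_mono[OF normal_imp_subgroup[OF Y] normal_imp_subgroup[OF M(1)] M(2) fin] .
    fix N assume "N \<lhd> G" "M \<subseteq> N" "N \<noteq> carrier G"
    then show "N = M"
      using M_max M(2) unfolding \<M>_def by blast
  qed
  moreover have "card (rcosets\<^bsub>G\<lparr>carrier := M\<rparr>\<^esub> Y) < card (rcosets Y)"
    using psubset_card_mono[OF fin rcosets_in_proper_subgroup[OF normal_imp_subgroup[OF Y]
          normal_imp_subgroup[OF M(1)] M(2,3)]] .
  ultimately show ?thesis
    using that M by blast
qed

lemma normal_Int_restrict:
  assumes L: "L \<lhd> G\<lparr>carrier := H\<rparr>" and H: "subgroup H G" and K: "subgroup K G"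
  shows "L \<inter> K \<lhd> G\<lparr>carrier := H \<inter> K\<rparr>"
proof -
  have "subgroup (H \<inter> K) (G\<lparr>carrier := H\<rparr>)"
    using subgroup_incl[OF subgroups_Inter_pair[OF H K] H] by blast
  then have "L \<inter> (H \<inter> K) \<lhd> G\<lparr>carrier := H \<inter> K\<rparr>"
    using group.normal_Int_subgroup[OF subgroup_imp_group[OF H] _ L] by simp
  moreover have "L \<inter> (H \<inter> K) = L \<inter> K"
    using normal_subset_carrier[OF L] by blast
  ultimately show ?thesis by simp
qed

lemma subgroup_right_stabilizer:
  assumes "K \<subseteq> carrier G"
  shows "subgroup {g \<in> carrier G. K #> g = K} G"
proof (rule subgroupI)
  show "{g \<in> carrier G. K #> g = K} \<noteq> {}"
    using assms by auto
next
  fix g assume g: "g \<in> {g \<in> carrier G. K #> g = K}"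
  then have "K #> inv g = (K #> g) #> inv g" by simp
  also have "\<dots> = K #> (g \<otimes> inv g)"
    using g assms by (intro coset_mult_assoc) auto
  also have "\<dots> = K"
    using g assms by simp
  finally show "inv g \<in> {g \<in> carrier G. K #> g = K}"
    using g by simp
next
  fix g h assume "g \<in> {g \<in> carrier G. K #> g = K}" "h \<in> {g \<in> carrier G. K #> g = K}"
  then show "g \<otimes> h \<in> {g \<in> carrier G. K #> g = K}"
    using assms by (simp add: coset_mult_assoc[symmetric])
qed auto

lemma right_stabilizer_subset:
  assumes "\<one> \<in> K"
  shows "{g \<in> carrier G. K #> g = K} \<subseteq> K"
proof
  fix g assume g: "g \<in> {g \<in> carrier G. K #> g = K}"
  have "\<one> \<otimes> g \<in> K #> g"
    using assms unfolding r_coset_def by blast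
  then show "g \<in> K"
    using g by simp
qed

lemma normal_core_subset: "\<one> \<in> U \<Longrightarrow> normal_core G U H \<subseteq> H"
  unfolding normal_core_def by fastforce

lemma mem_conjugate_iff:
  assumes x: "x \<in> carrier G" and H: "subgroup H G"
  shows "g \<in> x <# (H #> inv x) \<longleftrightarrow> g \<in> carrier G \<and> inv x \<otimes> g \<otimes> x \<in> H"
proof
  assume "g \<in> x <# (H #> inv x)"
  then obtain h where h: "h \<in> H" "g = x \<otimes> (h \<otimes> inv x)"
    unfolding l_coset_def r_coset_def by blast
  then have "inv x \<otimes> g \<otimes> x = h"
    using x subgroup.mem_carrier[OF H] by (simp add: m_assoc)
  then show "g \<in> carrier G \<and> inv x \<otimes> g \<otimes> x \<in> H"
    using h x subgroup.mem_carrier[OF H] by simp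
next
  assume g: "g \<in> carrier G \<and> inv x \<otimes> g \<otimes> x \<in> H"
  then have "g = x \<otimes> ((inv x \<otimes> g \<otimes> x) \<otimes> inv x)"
    using x by (simp add: m_assoc)
  then show "g \<in> x <# (H #> inv x)"
    using g unfolding l_coset_def r_coset_def by blast
qed

lemma conjugate_eq_if_l_coset_eq:
  assumes "x \<in> carrier G" "y \<in> carrier G" "subgroup H G" "x <# H = y <# H"
  shows "x <# (H #> inv x) = y <# (H #> inv y)"
proof -
  obtain h where h: "h \<in> H" "y = x \<otimes> h"
    using lcos_self[OF assms(2,3)] assms(4) unfolding l_coset_def by auto
  have h_carrier: "h \<in> carrier G"
    using subgroup.mem_carrier[OF assms(3) h(1)] .
  have "inv y \<otimes> g \<otimes> y \<in> H \<longleftrightarrow> inv x \<otimes> g \<otimes> x \<in> H" if "g \<in> carrier G" for g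
  proof -
    have "inv y \<otimes> g \<otimes> y = inv h \<otimes> (inv x \<otimes> g \<otimes> x) \<otimes> h"
      using that assms(1) h(2) h_carrier by (simp add: m_assoc inv_mult_group)
    moreover have "inv h \<otimes> c \<otimes> h \<in> H \<longleftrightarrow> c \<in> H" if "c \<in> carrier G" for c
    proof
      assume "inv h \<otimes> c \<otimes> h \<in> H"
      then have "h \<otimes> (inv h \<otimes> c \<otimes> h) \<otimes> inv h \<in> H"
        using h(1) assms(3) by (simp add: subgroup.m_closed subgroup.m_inv_closed)
      then show "c \<in> H"
        using that h_carrier by (simp add: m_assoc)
    qed (use h(1) assms(3) in \<open>simp add: subgroup.m_closed subgroup.m_inv_closed\<close>)
    ultimately show ?thesis
      using that assms(1) by simp
  qed
  then show ?thesis
    using mem_conjugate_iff[OF assms(1,3)] mem_conjugate_iff[OF assms(2,3)] by blast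
qed

lemma normal_core_eq_Inter_conjugates:
  assumes "U \<subseteq> carrier G" "U \<noteq> {}" "subgroup H G"
  shows "normal_core G U H = (\<Inter>x\<in>U. x <# (H #> inv x))"
  using assms mem_conjugate_iff[OF _ assms(3)] unfolding normal_core_def by blast

lemma normal_core_normal:
  assumes U: "subgroup U G" and H: "subgroup H G" "H \<subseteq> U"
  shows "normal_core G U H \<lhd> G\<lparr>carrier := U\<rparr>"
proof -
  have conj_closed: "inv x \<otimes> (y \<otimes> g \<otimes> inv y) \<otimes> x \<in> H"
    if "g \<in> normal_core G U H" "x \<in> U" "y \<in> U" for g x y
  proof -
    have "inv y \<otimes> x \<in> U"
      using that U by (simp add: subgroup.m_closed subgroup.m_inv_closed)
    then have "inv (inv y \<otimes> x) \<otimes> g \<otimes> (inv y \<otimes> x) \<in> H"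
      using that(1) unfolding normal_core_def by blast
    then show ?thesis
      using that subgroup.mem_carrier[OF U] unfolding normal_core_def
      by (simp add: inv_mult_group m_assoc)
  qed
  have sub: "subgroup (normal_core G U H) G"
  proof (rule subgroupI)
    show "normal_core G U H \<subseteq> carrier G"
      unfolding normal_core_def by blast
    show "normal_core G U H \<noteq> {}"
      using subgroup.one_closed[OF H(1)] subgroup.mem_carrier[OF U]
      unfolding normal_core_def by auto
  next
    fix g assume g: "g \<in> normal_core G U H"
    have "inv x \<otimes> inv g \<otimes> x = inv (inv x \<otimes> g \<otimes> x)" if "x \<in> U" for x
      using that g subgroup.mem_carrier[OF U] unfolding normal_core_def
      by (simp add: inv_mult_group m_assoc)
    then show "inv g \<in> normal_core G U H"
      using g H(1) unfolding normal_core_def by (simp add: subgroup.m_inv_closed)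
  next
    fix g h assume gh: "g \<in> normal_core G U H" "h \<in> normal_core G U H"
    have "inv x \<otimes> (g \<otimes> h) \<otimes> x = (inv x \<otimes> g \<otimes> x) \<otimes> (inv x \<otimes> h \<otimes> x)" if "x \<in> U" for x
      using that gh subgroup.mem_carrier[OF U] unfolding normal_core_def by (simp add: m_assoc)
    then show "g \<otimes> h \<in> normal_core G U H"
      using gh H(1) unfolding normal_core_def by (simp add: subgroup.m_closed)
  qed
  have "normal_core G U H \<subseteq> U"
    using normal_core_subset[OF subgroup.one_closed[OF U]] H(2) by blast
  then show ?thesis
    unfolding group.normal_inv_iff[OF subgroup_imp_group[OF U]]
    using subgroup_incl[OF sub U] conj_closed m_inv_consistent[OF U]
      subgroup.mem_carrier[OF U] sub subgroup.mem_carrier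
    by (auto simp: normal_core_def)
qed

lemma set_mult_not_subset_at_missed_step:
  assumes H: "subgroup H G" and L: "subgroup L G" "L \<subseteq> H" "H \<noteq> L"
    and K: "subgroup K G" "H \<inter> K \<subseteq> L"
  shows "\<not> H <#> K \<subseteq> L <#> K"
proof
  assume sub: "H <#> K \<subseteq> L <#> K"
  obtain x where x: "x \<in> H" "x \<notin> L"
    using L(2,3) by blast
  have "x \<otimes> \<one> \<in> H <#> K"
    unfolding set_mult_def using x(1) subgroup.one_closed[OF K(1)] by blast
  then have "x \<in> L <#> K"
    using sub subgroup.mem_carrier[OF H x(1)] by auto
  then obtain l k where l: "l \<in> L" and k: "k \<in> K" and x_eq: "x = l \<otimes> k"
    unfolding set_mult_def by blast
  then have "k = inv l \<otimes> x"
    using subgroup.mem_carrier[OF L(1)] subgroup.mem_carrier[OF K(1)] by simp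
  moreover have "l \<in> H"
    using l L(2) by blast
  ultimately have "k \<in> H"
    using subgroup.m_closed[OF H subgroup.m_inv_closed[OF H] x(1)] by simp
  then have "k \<in> L"
    using k K(2) by blast
  then show False
    using x_eq l x(2) subgroup.m_closed[OF L(1)] by simp
qed

lemma finite_steps_missed_by_subgroup:
  assumes fin: "finite ((\<lambda>x. x <# K) ` V)" and K: "subgroup K G"
    and S: "\<And>i. subgroup (S i) G" "decseq S" "S N \<subseteq> V"
  shows "finite {i. N \<le> i \<and> S i \<noteq> S (Suc i) \<and> S i \<inter> K \<subseteq> S (Suc i)}" (is "finite ?I")
proof -
  define f where "f i = S i <#> K" for i
  define L where "L = (\<lambda>x. x <# K) ` V"
  have "f i \<in> Union ` Pow L" if "N \<le> i" for i
  proof -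
    have "f i = \<Union>((\<lambda>s. s <# K) ` S i)"
      unfolding f_def set_mult_def l_coset_def by blast
    moreover have "S i \<subseteq> V"
      using S(3) decseqD[OF S(2) that] by blast
    then have "(\<lambda>s. s <# K) ` S i \<in> Pow L"
      unfolding L_def by auto
    ultimately show ?thesis
      by simp
  qed
  then have "f ` ?I \<subseteq> Union ` Pow L"
    by auto
  moreover have "finite (Union ` Pow L)"
    using fin unfolding L_def by simp
  ultimately have "finite (f ` ?I)"
    by (rule finite_subset)
  moreover have f_neq: "f j \<noteq> f i" if "i \<in> ?I" "i < j" for i j
  proof -
    have "\<not> f i \<subseteq> f (Suc i)"
      unfolding f_def using that(1) decseqD[OF S(2), of i "Suc i"]
      by (intro set_mult_not_subset_at_missed_step S(1) K) auto
    moreover have "f j \<subseteq> f (Suc i)"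
      unfolding f_def using decseqD[OF S(2)] that(2) by (intro mono_set_mult) auto
    ultimately show ?thesis by blast
  qed
  then have "inj_on f ?I"
  proof (intro inj_onI)
    fix i j assume "i \<in> ?I" "j \<in> ?I" "f i = f j"
    then show "i = j"
      using f_neq[of i j] f_neq[of j i] by (cases i j rule: linorder_cases) auto
  qed
  ultimately show ?thesis
    using finite_imageD by blast
qed

lemma exists_step_seen_by_subgroup:
  assumes fin: "finite ((\<lambda>x. x <# K) ` V)" and K: "subgroup K G"
    and S: "\<And>i. subgroup (S i) G" "decseq S" "S N \<subseteq> V"
    and J: "infinite J" "\<And>i. i \<in> J \<Longrightarrow> S i \<noteq> S (Suc i)"
  obtains i where "i \<in> J" "N \<le> i" "\<not> S i \<inter> K \<subseteq> S (Suc i)"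
proof -
  let ?I = "{i. N \<le> i \<and> S i \<noteq> S (Suc i) \<and> S i \<inter> K \<subseteq> S (Suc i)}"
  have "finite ?I"
    using finite_steps_missed_by_subgroup[OF fin K S] .
  then have "infinite (J - {..<N} - ?I)"
    using J(1) by simp
  then obtain i where i: "i \<in> J - {..<N} - ?I"
    using infinite_imp_nonempty by blast
  then have "i \<in> J" "N \<le> i" "i \<notin> ?I"
    by auto
  moreover have "S i \<noteq> S (Suc i)"
    using J(2) \<open>i \<in> J\<close> .
  ultimately show ?thesis
    using that by blast
qed

end

section \<open>Topological groups\<close>

locale topological_grp = group G for G :: "'a monoid" (structure) +
  fixes T :: "'a topology"
  assumes topological_group: "topological_group G T"
begin

lemma topspace_eq [simp]: "topspace T = carrier G"
  using topological_group unfolding topological_group_def by auto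

lemma continuous_map_mult:
  assumes "continuous_map Z T f" "continuous_map Z T g"
  shows "continuous_map Z T (\<lambda>x. f x \<otimes> g x)"
proof -
  have "continuous_map (prod_topology T T) T (\<lambda>p. fst p \<otimes> snd p)"
    using topological_group unfolding topological_group_def by auto
  then have "continuous_map Z T ((\<lambda>p. fst p \<otimes> snd p) \<circ> (\<lambda>x. (f x, g x)))"
    by (intro continuous_map_compose[of _ "prod_topology T T"] continuous_map_pairedI assms)
  then show ?thesis by (simp add: o_def)
qed

lemma continuous_map_inv:
  assumes "continuous_map Z T f"
  shows "continuous_map Z T (\<lambda>x. inv (f x))"
proof -
  have "continuous_map T T (\<lambda>x. inv x)"
    using topological_group unfolding topological_group_def by auto
  then show ?thesis
    using continuous_map_compose[OF assms] by (simp add: o_def)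
qed

lemma homeomorphic_map_l_mult: "x \<in> carrier G \<Longrightarrow> homeomorphic_map T T (\<lambda>y. x \<otimes> y)"
  unfolding homeomorphic_map_maps homeomorphic_maps_def
  by (intro exI[of _ "\<lambda>y. inv x \<otimes> y"])
    (auto intro: continuous_map_mult simp: m_assoc[symmetric])

lemma homeomorphic_map_r_mult: "x \<in> carrier G \<Longrightarrow> homeomorphic_map T T (\<lambda>y. y \<otimes> x)"
  unfolding homeomorphic_map_maps homeomorphic_maps_def
  by (intro exI[of _ "\<lambda>y. y \<otimes> inv x"])
    (auto intro: continuous_map_mult simp: m_assoc)

lemma l_coset_eq_image: "x <# H = (\<lambda>y. x \<otimes> y) ` H"
  by (auto simp: l_coset_def)

lemma r_coset_eq_image: "H #> x = (\<lambda>y. y \<otimes> x) ` H"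
  by (auto simp: r_coset_def)

lemma openin_l_coset: "x \<in> carrier G \<Longrightarrow> openin T H \<Longrightarrow> openin T (x <# H)"
  unfolding l_coset_eq_image
  using homeomorphic_map_openness[OF homeomorphic_map_l_mult, of x H] openin_subset[of T H] by simp

lemma openin_r_coset: "x \<in> carrier G \<Longrightarrow> openin T H \<Longrightarrow> openin T (H #> x)"
  unfolding r_coset_eq_image
  using homeomorphic_map_openness[OF homeomorphic_map_r_mult, of x H] openin_subset[of T H] by simp

lemma closedin_r_coset: "x \<in> carrier G \<Longrightarrow> closedin T H \<Longrightarrow> closedin T (H #> x)"
  unfolding r_coset_eq_image
  using homeomorphic_map_closedness[OF homeomorphic_map_r_mult, of x H] closedin_subset[of T H] by simp

lemma openin_supergroup:
  assumes "openin T Y" "subgroup Y G" "subgroup M G" "Y \<subseteq> M"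
  shows "openin T M"
proof -
  have "M = (\<Union>m\<in>M. Y #> m)"
    using union_rcosets_eq assms(2-4) .
  then show ?thesis
    using openin_r_coset[OF subgroup.mem_carrier[OF assms(3)] assms(1)]
    by (metis openin_Union imageE)
qed

lemma openin_subgroup_imp_closedin:
  assumes "subgroup H G" "openin T H"
  shows "closedin T H"
proof -
  have "topspace T - H = (\<Union>x\<in>carrier G - H. H #> x)"
  proof
    show "topspace T - H \<subseteq> (\<Union>x\<in>carrier G - H. H #> x)"
      using rcos_self[OF _ assms(1)] by auto
    have "h \<otimes> x \<notin> H" if "h \<in> H" "x \<in> carrier G - H" for h x
    proof
      assume "h \<otimes> x \<in> H"
      then have "inv h \<otimes> (h \<otimes> x) \<in> H"
        using that(1) assms(1) by (simp add: subgroup.m_closed subgroup.m_inv_closed)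
      then show False
        using that subgroup.mem_carrier[OF assms(1)] by simp
    qed
    then show "(\<Union>x\<in>carrier G - H. H #> x) \<subseteq> topspace T - H"
      using subgroup.mem_carrier[OF assms(1)] by (auto simp: r_coset_def)
  qed
  moreover have "openin T (\<Union>x\<in>carrier G - H. H #> x)"
    using openin_r_coset assms(2) by auto
  ultimately show ?thesis
    unfolding closedin_def using subgroup.subset[OF assms(1)] by simp
qed

lemma closedin_finite_index_imp_openin:
  assumes H: "subgroup H G" "closedin T H" and K: "subgroup K G" "openin T K"
    and "H \<subseteq> K" and fin: "finite ((\<lambda>x. H #> x) ` K)"
  shows "openin T H"
proof -
  have "K - H = (\<Union>x\<in>K - H. H #> x)"
  proof
    show "K - H \<subseteq> (\<Union>x\<in>K - H. H #> x)"
      using rcos_self[OF subgroup.mem_carrier[OF K(1)] H(1)] by blast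
    have "h \<otimes> x \<in> K - H" if "h \<in> H" "x \<in> K - H" for h x
    proof -
      have "h \<otimes> x \<in> K"
        using that \<open>H \<subseteq> K\<close> subgroup.m_closed[OF K(1)] by blast
      moreover have "h \<otimes> x \<notin> H"
      proof
        assume "h \<otimes> x \<in> H"
        then have "inv h \<otimes> (h \<otimes> x) \<in> H"
          using that(1) H(1) by (simp add: subgroup.m_closed subgroup.m_inv_closed)
        then show False
          using that subgroup.mem_carrier[OF H(1)] subgroup.mem_carrier[OF K(1)] by simp
      qed
      ultimately show ?thesis by blast
    qed
    then show "(\<Union>x\<in>K - H. H #> x) \<subseteq> K - H"
      unfolding r_coset_def by blast
  qed
  moreover have "closedin T (\<Union>x\<in>K - H. H #> x)"
  proof (rule closedin_Union)
    show "finite ((\<lambda>x. H #> x) ` (K - H))"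
      using fin by (rule finite_subset[rotated]) blast
    show "\<And>C. C \<in> (\<lambda>x. H #> x) ` (K - H) \<Longrightarrow> closedin T C"
      using closedin_r_coset[OF subgroup.mem_carrier[OF K(1)] H(2)] by blast
  qed
  ultimately have "openin T (K - (K - H))"
    using K(2) by (metis openin_diff)
  moreover have "K - (K - H) = H"
    using \<open>H \<subseteq> K\<close> by blast
  ultimately show ?thesis by simp
qed

lemma finite_l_cosets_of_open_subgroup:
  assumes K: "compactin T K" "subgroup K G" and H: "subgroup H G" "openin T H" "H \<subseteq> K"
  shows "finite ((\<lambda>x. x <# H) ` K)"
proof -
  have "x \<in> x <# H" if "x \<in> K" for x
    using lcos_self[OF subgroup.mem_carrier[OF K(2) that] H(1)] .
  then have "K \<subseteq> \<Union>((\<lambda>x. x <# H) ` K)"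
    by blast
  moreover have "openin T (x <# H)" if "x \<in> K" for x
    using openin_l_coset[OF subgroup.mem_carrier[OF K(2) that] H(2)] .
  ultimately obtain F where F: "finite F" "F \<subseteq> (\<lambda>x. x <# H) ` K" "K \<subseteq> \<Union>F"
    using K(1) unfolding compactin_def by (metis (no_types, lifting) imageE)
  have "(\<lambda>x. x <# H) ` K \<subseteq> F"
  proof
    fix C assume "C \<in> (\<lambda>x. x <# H) ` K"
    then obtain y where y: "y \<in> K" "C = y <# H"
      by blast
    then obtain D where D: "D \<in> F" "y \<in> D"
      using F(3) by blast
    then obtain z where z: "z \<in> K" "D = z <# H"
      using F(2) by blast
    then have "z <# H = y <# H"
      using l_repr_independence[OF _ subgroup.mem_carrier[OF K(2) z(1)] H(1)] D(2) by simp
    then show "C \<in> F"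
      using y z D by simp
  qed
  then show ?thesis
    using F(1) finite_subset by blast
qed

lemma finite_rcosets_open_normal:
  assumes K: "compactin T K" "subgroup K G" and H: "openin T H" "H \<lhd> G\<lparr>carrier := K\<rparr>"
  shows "finite (rcosets\<^bsub>G\<lparr>carrier := K\<rparr>\<^esub> H)"
proof -
  have "subgroup H G"
    using subgroup_of_subgroup[OF normal_imp_subgroup[OF H(2)] K(2)] .
  moreover have "H #> x = x <# H" if "x \<in> K" for x
    using normal.coset_eq[OF H(2)] that by simp
  then have "rcosets\<^bsub>G\<lparr>carrier := K\<rparr>\<^esub> H = (\<lambda>x. x <# H) ` K"
    unfolding rcosets_carrier_update by auto
  ultimately show ?thesis
    using finite_l_cosets_of_open_subgroup[OF K _ H(1) normal_subset_carrier[OF H(2)]] by simp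
qed

lemma Hausdorff_space_if_totally_disconnected:
  assumes "totally_disconnected_space T"
  shows "Hausdorff_space T"
  unfolding Hausdorff_space_closedin_diagonal
proof -
  have "continuous_map (prod_topology T T) T (\<lambda>p. fst p \<otimes> inv (snd p))"
    by (intro continuous_map_mult continuous_map_inv continuous_map_fst continuous_map_snd)
  moreover have "closedin T {\<one>}"
    using t1_space_if_totally_disconnected[OF assms] by (simp add: t1_space_closedin_singleton)
  ultimately have "closedin (prod_topology T T)
      {p \<in> topspace (prod_topology T T). fst p \<otimes> inv (snd p) \<in> {\<one>}}"
    by (rule closedin_continuous_map_preimage)
  moreover have "{p \<in> topspace (prod_topology T T). fst p \<otimes> inv (snd p) \<in> {\<one>}}
      = (\<lambda>x. (x, x)) ` topspace T"
    using mult_inv_eq_one_iff by auto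
  ultimately show "closedin (prod_topology T T) ((\<lambda>x. (x, x)) ` topspace T)"
    by simp
qed

lemma compact_open_subgroup_Int:
  assumes K: "compact_open_subgroup G T K" and L: "subgroup L G" "openin T L"
  shows "compact_open_subgroup G T (L \<inter> K)"
proof -
  have K_sub: "subgroup K G" "compactin T K" "openin T K"
    using K unfolding compact_open_subgroup_def by auto
  have "closedin T (L \<inter> K)"
    using openin_subgroup_imp_closedin L K_sub by blast
  then have "compactin T (L \<inter> K)"
    using closed_compactin[OF K_sub(2)] by blast
  then show ?thesis
    unfolding compact_open_subgroup_def using subgroups_Inter_pair[OF L(1) K_sub(1)] L(2) K_sub(3)
    by blast
qed

lemma compact_open_subgroup_if_open_normal:
  assumes V: "compact_open_subgroup G T V" and K: "K \<lhd> G\<lparr>carrier := V\<rparr>" "openin T K"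
  shows "compact_open_subgroup G T K"
proof -
  have "subgroup K G"
    using subgroup_of_subgroup[OF normal_imp_subgroup[OF K(1)]] V
    unfolding compact_open_subgroup_def by blast
  moreover have "K \<inter> V = K"
    using normal_subset_carrier[OF K(1)] by blast
  ultimately show ?thesis
    using compact_open_subgroup_Int[OF V _ K(2)] by metis
qed

lemma compactin_mult_nbhd_subset:
  assumes K: "compactin T K" "openin T K"
  obtains V where "openin T V" "\<one> \<in> V" "\<And>k b. k \<in> K \<Longrightarrow> b \<in> V \<Longrightarrow> k \<otimes> b \<in> K"
proof -
  have K_carrier: "K \<subseteq> carrier G"
    using openin_subset[OF K(2)] by simp
  define M where "M = {p \<in> topspace (prod_topology T T). fst p \<otimes> snd p \<in> K}"
  have M_open: "openin (prod_topology T T) M"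
    unfolding M_def
    using openin_continuous_map_preimage[OF continuous_map_mult[OF continuous_map_fst continuous_map_snd] K(2)] .
  have "K \<times> {\<one>} \<subseteq> M"
    unfolding M_def using K_carrier by auto
  then have "\<exists>U V. openin T U \<and> openin T V \<and> K \<subseteq> U \<and> \<one> \<in> V \<and> U \<times> V \<subseteq> M"
    using tube_lemma_left[OF M_open K(1)] by simp
  then obtain U V where V: "openin T V" "\<one> \<in> V" and "K \<subseteq> U" "U \<times> V \<subseteq> M"
    by blast
  have KV: "k \<otimes> b \<in> K" if "k \<in> K" "b \<in> V" for k b
  proof -
    have "(k, b) \<in> M"
      using that \<open>K \<subseteq> U\<close> \<open>U \<times> V \<subseteq> M\<close> by blast
    then show ?thesis
      unfolding M_def by simp
  qed
  show ?thesis
    by (rule that[OF V KV])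
qed

lemma compact_open_subgroup_in_compact_open_set:
  assumes K: "compactin T K" "openin T K" "\<one> \<in> K"
  obtains U where "subgroup U G" "compactin T U" "openin T U" "U \<subseteq> K"
proof -
  have K_carrier: "K \<subseteq> carrier G"
    using openin_subset[OF K(2)] by simp
  obtain V where V: "openin T V" "\<one> \<in> V" and KV: "\<And>k b. k \<in> K \<Longrightarrow> b \<in> V \<Longrightarrow> k \<otimes> b \<in> K"
    using compactin_mult_nbhd_subset[OF K(1,2)] by blast
  define B where "B = V \<inter> {x \<in> topspace T. inv x \<in> V}"
  have B: "openin T B" "\<one> \<in> B"
    unfolding B_def using V openin_continuous_map_preimage[OF continuous_map_inv[OF continuous_map_id] V(1)]
    by auto
  define H where "H = {g \<in> carrier G. K #> g = K}"
  have H: "subgroup H G" "H \<subseteq> K"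
    unfolding H_def using subgroup_right_stabilizer[OF K_carrier] right_stabilizer_subset[OF K(3)] .
  have "B \<subseteq> H"
  proof
    fix b assume b: "b \<in> B"
    then have b_carrier: "b \<in> carrier G" and "K #> b \<subseteq> K" "K #> inv b \<subseteq> K"
      using openin_subset[OF B(1)] KV unfolding B_def r_coset_def by auto
    then have "K = (K #> inv b) #> b"
      using K_carrier by (simp add: coset_mult_assoc)
    also have "\<dots> \<subseteq> K #> b"
      using \<open>K #> inv b \<subseteq> K\<close> unfolding r_coset_def by blast
    finally show "b \<in> H"
      unfolding H_def using b_carrier \<open>K #> b \<subseteq> K\<close> by blast
  qed
  have H_open: "openin T H"
    unfolding openin_subopen[of T H]
  proof
    fix h assume h: "h \<in> H"
    have "h <# B \<subseteq> H"
      unfolding l_coset_def using h \<open>B \<subseteq> H\<close> subgroup.m_closed[OF H(1)] by blast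
    moreover have "h \<in> h <# B"
      unfolding l_coset_def using B(2) subgroup.mem_carrier[OF H(1) h] by force
    ultimately show "\<exists>S. openin T S \<and> h \<in> S \<and> S \<subseteq> H"
      using openin_l_coset[OF subgroup.mem_carrier[OF H(1) h] B(1)] by blast
  qed
  moreover have "compactin T H"
    using closed_compactin[OF K(1) H(2) openin_subgroup_imp_closedin[OF H(1) H_open]] .
  ultimately show ?thesis
    using that H by blast
qed

theorem van_dantzig:
  assumes "totally_disconnected_space T" "locally_compact_space T" "openin T W" "\<one> \<in> W"
  obtains U where "subgroup U G" "compactin T U" "openin T U" "U \<subseteq> W"
proof -
  have one: "\<one> \<in> topspace T"
    by simp
  then obtain V K where VK: "openin T V" "compactin T K" "\<one> \<in> V" "V \<subseteq> K"
    using assms(2) unfolding locally_compact_space_def by blast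
  have "connected_component_of_set T \<one> = {\<one>}"
    using assms(1) one unfolding totally_disconnected_space_def by blast
  then have "{\<one>} \<in> connected_components_of T"
    unfolding connected_components_of_def using one by (intro image_eqI[of _ _ \<one>]) auto
  moreover have "compactin T {\<one>}" "{\<one>} \<subseteq> W \<inter> V"
    using one assms(4) VK(3) by auto
  ultimately obtain U' V' where U': "openin T U'" "openin T V'" "disjnt U' V'"
      "U' \<union> V' = topspace T" "{\<one>} \<subseteq> U'" "U' \<subseteq> W \<inter> V"
    using wilder_locally_compact_component_thm[OF assms(2) Hausdorff_space_if_totally_disconnected[OF assms(1)]
        _ _ openin_Int[OF assms(3) VK(1)]] by blast
  have "topspace T - U' = V'"
    using U'(3,4) unfolding disjnt_def by blast
  then have "closedin T U'"
    unfolding closedin_def using U'(2,4) by auto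
  then have "compactin T U'"
    using closed_compactin[OF VK(2)] U'(6) VK(4) by blast
  then obtain U where "subgroup U G" "compactin T U" "openin T U" "U \<subseteq> U'"
    using compact_open_subgroup_in_compact_open_set U'(1,5) by blast
  then show ?thesis
    using that U'(6) by blast
qed

lemma openin_normal_core:
  assumes U: "compactin T U" "subgroup U G" and H: "subgroup H G" "openin T H" "H \<subseteq> U"
  shows "openin T (normal_core G U H)"
proof -
  have "finite ((\<lambda>x. x <# (H #> inv x)) ` U)"
  proof (rule finite_image_if_factors[OF finite_l_cosets_of_open_subgroup[OF U H]])
    fix x y assume "x \<in> U" "y \<in> U" "x <# H = y <# H"
    then show "x <# (H #> inv x) = y <# (H #> inv y)"
      using conjugate_eq_if_l_coset_eq[OF _ _ H(1)] subgroup.mem_carrier[OF U(2)] by simp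
  qed
  moreover have "openin T (x <# (H #> inv x))" if "x \<in> U" for x
    using subgroup.mem_carrier[OF U(2) that] by (intro openin_l_coset openin_r_coset H(2)) auto
  ultimately have "openin T (\<Inter>x\<in>U. x <# (H #> inv x))"
    using subgroup.one_closed[OF U(2)] by (intro openin_Inter) auto
  moreover have "U \<noteq> {}"
    using subgroup.one_closed[OF U(2)] by blast
  ultimately show ?thesis
    using normal_core_eq_Inter_conjugates[OF subgroup.subset[OF U(2)] _ H(1)] by simp
qed

end

section \<open>Composition chains\<close>

definition composition_step :: "'a monoid \<Rightarrow> 'a topology \<Rightarrow> 'a set \<Rightarrow> 'a set \<Rightarrow> bool" where
  "composition_step G T H K \<longleftrightarrow> subgroup H G \<and> closedin T H \<and> subgroup K G \<and> closedin T K
     \<and> K \<lhd> G\<lparr>carrier := H\<rparr> \<and> (H \<noteq> {\<one>\<^bsub>G\<^esub>} \<longrightarrow> simple_group (G\<lparr>carrier := H\<rparr> Mod K))"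

definition composition_chain ::
    "'a monoid \<Rightarrow> 'a topology \<Rightarrow> (nat \<Rightarrow> 'a set) \<Rightarrow> nat \<Rightarrow> 'a set \<Rightarrow> 'a set \<Rightarrow> bool" where
  "composition_chain G T c n H K \<longleftrightarrow> c 0 = H \<and> c n = K \<and> (\<forall>i<n. composition_step G T (c i) (c (Suc i)))"

definition chain_append :: "(nat \<Rightarrow> 'a) \<Rightarrow> nat \<Rightarrow> (nat \<Rightarrow> 'a) \<Rightarrow> nat \<Rightarrow> 'a" where
  "chain_append c n d i = (if i \<le> n then c i else d (i - n))"

lemma composition_series_iff:
  "composition_series G T U S \<longleftrightarrow>
     S 0 = U \<and> (\<forall>i. composition_step G T (S i) (S (Suc i))) \<and> (\<Inter>i. S i) = {\<one>\<^bsub>G\<^esub>}"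
  unfolding composition_series_def composition_step_def by blast

lemma composition_step_subset: "composition_step G T H K \<Longrightarrow> K \<subseteq> H"
  unfolding composition_step_def using normal_subset_carrier by blast

lemma composition_step_one_closed: "composition_step G T H K \<Longrightarrow> \<one>\<^bsub>G\<^esub> \<in> H"
  unfolding composition_step_def using subgroup.one_closed by blast

lemma composition_series_decseq: "composition_series G T U S \<Longrightarrow> decseq S"
  unfolding composition_series_iff decseq_Suc_iff using composition_step_subset by blast

lemma composition_chain_refl: "composition_chain G T (\<lambda>i. H) 0 H H"
  unfolding composition_chain_def by simp

lemma composition_chain_single:
  "composition_step G T H K \<Longrightarrow> composition_chain G T (\<lambda>i. if i = 0 then H else K) 1 H K"
  unfolding composition_chain_def by simp

lemma chain_append_shift: "c n = d 0 \<Longrightarrow> chain_append c n d (n + i) = d i"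
  unfolding chain_append_def by (cases i) auto

lemma chain_append_le [simp]: "i \<le> n \<Longrightarrow> chain_append c n d i = c i"
  unfolding chain_append_def by simp

lemma chain_append_cases:
  assumes "c n = d 0"
  obtains "i < n" "chain_append c n d i = c i" "chain_append c n d (Suc i) = c (Suc i)"
  | k where "i = n + k" "chain_append c n d i = d k" "chain_append c n d (Suc i) = d (Suc k)"
proof (cases "i < n")
  case True
  then show ?thesis using that(1) by simp
next
  case False
  then obtain k where "i = n + k"
    using le_Suc_ex not_less by blast
  then show ?thesis
    using that(2) chain_append_shift[of c n d k, OF assms] chain_append_shift[of c n d "Suc k", OF assms] by simp
qed

lemma composition_chain_append:
  assumes c: "composition_chain G T c n H K" and d: "composition_chain G T d m K L"
  shows "composition_chain G T (chain_append c n d) (n + m) H L"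
  unfolding composition_chain_def
proof (intro conjI allI impI)
  have cd: "c n = d 0"
    using c d unfolding composition_chain_def by simp
  show "chain_append c n d 0 = H" "chain_append c n d (n + m) = L"
    using c d chain_append_shift[of c n d m, OF cd] unfolding composition_chain_def by auto
  fix i assume "i < n + m"
  then show "composition_step G T (chain_append c n d i) (chain_append c n d (Suc i))"
    using c d by (cases rule: chain_append_cases[of c n d i, OF cd]) (auto simp: composition_chain_def)
qed

lemma composition_series_append:
  assumes c: "composition_chain G T c n H K" and S: "composition_series G T K S"
  shows "composition_series G T H (chain_append c n S)"
  unfolding composition_series_iff
proof (intro conjI allI)
  have cS: "c n = S 0"
    using c S unfolding composition_chain_def composition_series_iff by simp
  show "chain_append c n S 0 = H"
    using c unfolding composition_chain_def by simp
  show step: "composition_step G T (chain_append c n S i) (chain_append c n S (Suc i))" for i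
    using c S by (cases rule: chain_append_cases[of c n S i, OF cS])
      (auto simp: composition_chain_def composition_series_iff)
  have "(\<Inter>i. chain_append c n S i) \<subseteq> (\<Inter>i. S i)"
    using chain_append_shift[of c n S, OF cS] by (metis INT_lower UNIV_I le_INF_iff)
  moreover have "\<one>\<^bsub>G\<^esub> \<in> chain_append c n S i" for i
    using composition_step_one_closed[OF step] .
  ultimately show "(\<Inter>i. chain_append c n S i) = {\<one>\<^bsub>G\<^esub>}"
    using S unfolding composition_series_iff by blast
qed

lemma factor_indices_chain_append:
  "c n = d 0 \<Longrightarrow> j \<in> factor_indices G d A \<Longrightarrow> n + j \<in> factor_indices G (chain_append c n d) A"
  unfolding factor_indices_def using chain_append_shift[of c n d j] chain_append_shift[of c n d "Suc j"]
  by simp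

lemma composition_series_concat:
  assumes ch: "\<And>k. composition_chain G T (ch k) (len k) (W k) (W (Suc k))"
    and len: "\<And>k. len k \<ge> 1" and Inter: "(\<Inter>k. W k) \<subseteq> {\<one>\<^bsub>G\<^esub>}"
  shows "\<exists>S. composition_series G T (W 0) S
    \<and> (\<forall>k j. j \<le> len k \<longrightarrow> S ((\<Sum>i<k. len i) + j) = ch k j)"
proof -
  have ch_ends: "ch k 0 = W k" "ch k (len k) = W (Suc k)" for k
    using ch[of k] unfolding composition_chain_def by auto
  obtain S where S_eq: "\<And>k j. j \<le> len k \<Longrightarrow> S ((\<Sum>i<k. len i) + j) = ch k j"
    and S_step: "\<And>n. \<exists>k j. j < len k \<and> S n = ch k j \<and> S (Suc n) = ch k (Suc j)"
    using concat_sequences[of len ch] len ch_ends by metis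
  have step: "composition_step G T (S n) (S (Suc n))" for n
    using S_step[of n] ch unfolding composition_chain_def by fastforce
  have "composition_series G T (W 0) S"
    unfolding composition_series_iff
  proof (intro conjI allI step)
    show "S 0 = W 0"
      using S_eq[of 0 0] ch_ends by simp
    have "(\<Inter>n. S n) \<subseteq> (\<Inter>k. S ((\<Sum>i<k. len i) + 0))"
      by blast
    also have "\<dots> = (\<Inter>k. W k)"
      using S_eq[of 0] ch_ends by simp
    finally have "(\<Inter>n. S n) \<subseteq> {\<one>\<^bsub>G\<^esub>}"
      using Inter by simp
    moreover have "\<one>\<^bsub>G\<^esub> \<in> S n" for n
      using composition_step_one_closed[OF step] .
    ultimately show "(\<Inter>n. S n) = {\<one>\<^bsub>G\<^esub>}"
      by blast
  qed
  then show ?thesis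
    using S_eq by blast
qed

lemma composition_factor_inf_mult_concat:
  assumes ch: "\<And>k. composition_chain G T (ch k) (len k) (W k) (W (Suc k))"
    and A: "\<And>k. \<exists>j<len k. j \<in> factor_indices G (ch k) A" and Inter: "(\<Inter>k. W k) \<subseteq> {\<one>\<^bsub>G\<^esub>}"
  shows "composition_factor_inf_mult G T (W 0) A"
proof -
  have len: "len k \<ge> 1" for k
    using A[of k] by auto
  obtain S where S: "composition_series G T (W 0) S"
    and "\<forall>k j. j \<le> len k \<longrightarrow> S ((\<Sum>i<k. len i) + j) = ch k j"
    using composition_series_concat[OF ch len Inter] by blast
  then have S_eq: "S ((\<Sum>i<k. len i) + j) = ch k j" if "j \<le> len k" for k j
    using that by blast
  obtain jf where jf: "\<And>k. jf k < len k \<and> jf k \<in> factor_indices G (ch k) A"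
    using choice[of "\<lambda>k j. j < len k \<and> j \<in> factor_indices G (ch k) A"] A by blast
  define f where "f k = (\<Sum>i<k. len i) + jf k" for k
  have f_in: "f k \<in> factor_indices G S A" for k
    using S_eq[of "jf k" k] S_eq[of "Suc (jf k)" k] jf[of k]
    unfolding f_def factor_indices_def by simp
  have "strict_mono f"
  proof (rule strict_monoI_Suc)
    fix k
    have "f k < (\<Sum>i<Suc k. len i)"
      using jf[of k] unfolding f_def by simp
    also have "\<dots> \<le> f (Suc k)"
      unfolding f_def by simp
    finally show "f k < f (Suc k)" .
  qed
  then have "inj f"
    by (rule strict_mono_imp_inj_on)
  then have "infinite (range f)"
    by (rule range_inj_infinite)
  moreover have "range f \<subseteq> factor_indices G S A"
    using f_in by blast
  ultimately have "infinite (factor_indices G S A)"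
    using infinite_super by blast
  then show ?thesis
    unfolding composition_factor_inf_mult_def using S by blast
qed

context topological_grp
begin

lemma composition_step_proper:
  assumes "composition_step G T H K" "H \<noteq> {\<one>}"
  shows "K \<noteq> H"
proof
  assume "K = H"
  moreover have "subgroup H G" "simple_group (G\<lparr>carrier := H\<rparr> Mod K)"
    using assms unfolding composition_step_def by auto
  ultimately show False
    using group.self_factor_not_simple[OF subgroup_imp_group] by simp
qed

lemma factor_index_proper_step:
  assumes "composition_series G T U S" "i \<in> factor_indices G S A"
  shows "S i \<noteq> S (Suc i)"
proof -
  have "composition_step G T (S i) (S (Suc i))" "S i \<noteq> {\<one>}"
    using assms unfolding composition_series_iff factor_indices_def by auto
  then have "S (Suc i) \<noteq> S i"
    by (rule composition_step_proper)
  then show ?thesis by simp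
qed

lemma composition_chain_to_open_normal:
  assumes "compactin T H" "closedin T H" "subgroup H G" "openin T K" "K \<lhd> G\<lparr>carrier := H\<rparr>"
  shows "\<exists>c n. composition_chain G T c n H K"
  using assms
proof (induction "card (rcosets\<^bsub>G\<lparr>carrier := H\<rparr>\<^esub> K)" arbitrary: H rule: less_induct)
  case less
  note H = less.prems(1-3) and K = less.prems(4,5)
  show ?case
  proof (cases "K = H")
    case True
    then show ?thesis
      using composition_chain_refl by blast
  next
    case False
    interpret H: group "G\<lparr>carrier := H\<rparr>"
      using subgroup_imp_group[OF H(3)] .
    have K_sub: "subgroup K G"
      using subgroup_of_subgroup[OF normal_imp_subgroup[OF K(2)] H(3)] .
    obtain M where M: "M \<lhd> G\<lparr>carrier := H\<rparr>" "K \<subseteq> M" "simple_group (G\<lparr>carrier := H\<rparr> Mod M)"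
        "card (rcosets\<^bsub>G\<lparr>carrier := M\<rparr>\<^esub> K) < card (rcosets\<^bsub>G\<lparr>carrier := H\<rparr>\<^esub> K)"
      using H.exists_maximal_normal_above[OF K(2) finite_rcosets_open_normal[OF H(1,3) K]] False
      by auto
    have M_sub: "subgroup M G"
      using subgroup_of_subgroup[OF normal_imp_subgroup[OF M(1)] H(3)] .
    have "openin T M"
      using openin_supergroup[OF K(1) K_sub M_sub M(2)] .
    then have M_closed: "closedin T M"
      using openin_subgroup_imp_closedin[OF M_sub] by blast
    then have "compactin T M"
      using closed_compactin[OF H(1) normal_subset_carrier[OF M(1)]] by blast
    moreover have "K \<lhd> G\<lparr>carrier := M\<rparr>"
      using H.normal_restrict_supergroup[OF normal_imp_subgroup[OF M(1)] K(2) M(2)] by simp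
    ultimately obtain c n where "composition_chain G T c n M K"
      using less.hyps[OF M(4) _ M_closed M_sub K(1)] by blast
    moreover have "composition_chain G T (\<lambda>i. if i = 0 then H else M) 1 H M"
      using H(2,3) M_sub M_closed M(1,3) by (intro composition_chain_single) (simp add: composition_step_def)
    ultimately show ?thesis
      using composition_chain_append by blast
  qed
qed

lemma composition_series_compact_open_members:
  assumes S: "composition_series G T U S" and U: "subgroup U G" "compactin T U" "openin T U"
  shows "subgroup (S i) G \<and> compactin T (S i) \<and> openin T (S i)"
proof (induction i)
  case 0
  then show ?case
    using S U unfolding composition_series_iff by simp
next
  case (Suc i)
  have step: "composition_step G T (S i) (S (Suc i))"
    using S unfolding composition_series_iff by simp
  then have sub: "subgroup (S (Suc i)) G" and closed: "closedin T (S (Suc i))"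
    and "S (Suc i) \<subseteq> S i"
    using composition_step_subset[OF step] unfolding composition_step_def by auto
  have "compactin T (S (Suc i))"
    using closed_compactin[OF _ \<open>S (Suc i) \<subseteq> S i\<close> closed] Suc.IH by blast
  moreover have "openin T (S (Suc i))"
  proof (cases "S i = {\<one>}")
    case True
    then have "S (Suc i) = S i"
      using subgroup.one_closed[OF sub] \<open>S (Suc i) \<subseteq> S i\<close> by auto
    then show ?thesis
      using Suc.IH by simp
  next
    case False
    then have "simple_group (G\<lparr>carrier := S i\<rparr> Mod S (Suc i))"
      using step unfolding composition_step_def by simp
    then have "finite (carrier (G\<lparr>carrier := S i\<rparr> Mod S (Suc i)))"
      by (rule simple_group_finite_carrier)
    then have "finite ((\<lambda>x. S (Suc i) #> x) ` S i)"
      unfolding FactGroup_def rcosets_carrier_update by simp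
    then show ?thesis
      using closedin_finite_index_imp_openin[OF sub closed _ _ \<open>S (Suc i) \<subseteq> S i\<close>] Suc.IH by blast
  qed
  ultimately show ?case
    using sub by simp
qed

lemma composition_step_Int_normal:
  assumes step: "composition_step G T H L" and "H \<noteq> {\<one>}"
    and V: "subgroup V G" "H \<subseteq> V" and N: "N \<lhd> G\<lparr>carrier := V\<rparr>" "closedin T N"
    and "\<not> H \<inter> N \<subseteq> L"
  shows "composition_step G T (H \<inter> N) (L \<inter> N)"
    and "G\<lparr>carrier := H \<inter> N\<rparr> Mod (L \<inter> N) \<cong> G\<lparr>carrier := H\<rparr> Mod L"
proof -
  have H: "subgroup H G" "closedin T H" and L: "subgroup L G" "closedin T L"
    and L_normal: "L \<lhd> G\<lparr>carrier := H\<rparr>" and simple: "simple_group (G\<lparr>carrier := H\<rparr> Mod L)"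
    using step \<open>H \<noteq> {\<one>}\<close> unfolding composition_step_def by auto
  interpret H: group "G\<lparr>carrier := H\<rparr>"
    using subgroup_imp_group[OF H(1)] .
  have "N \<inter> H \<lhd> G\<lparr>carrier := H\<rparr>"
    using group.normal_Int_subgroup[OF subgroup_imp_group[OF V(1)] subgroup_incl[OF H(1) V] N(1)]
    by simp
  then have HN_normal: "H \<inter> N \<lhd> G\<lparr>carrier := H\<rparr>"
    by (simp add: Int_commute)
  have "L \<inter> N = L \<inter> (H \<inter> N)"
    using normal_subset_carrier[OF L_normal] by blast
  then have LN_normal: "L \<inter> N \<lhd> G\<lparr>carrier := H \<inter> N\<rparr>"
    and iso: "G\<lparr>carrier := H \<inter> N\<rparr> Mod (L \<inter> N) \<cong> G\<lparr>carrier := H\<rparr> Mod L"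
    using H.simple_quotient_Int_normal[OF L_normal simple HN_normal] \<open>\<not> H \<inter> N \<subseteq> L\<close> by simp_all
  show "G\<lparr>carrier := H \<inter> N\<rparr> Mod (L \<inter> N) \<cong> G\<lparr>carrier := H\<rparr> Mod L"
    using iso .
  have "group (G\<lparr>carrier := H \<inter> N\<rparr> Mod (L \<inter> N))"
    using normal.factorgroup_is_group[OF LN_normal] .
  then have "simple_group (G\<lparr>carrier := H \<inter> N\<rparr> Mod (L \<inter> N))"
    using simple_group.iso_simple[OF simple] group.iso_sym[OF _ iso] unfolding is_iso_def by blast
  moreover have "subgroup (H \<inter> N) G" "subgroup (L \<inter> N) G"
    using subgroup_of_subgroup[OF normal_imp_subgroup[OF N(1)] V(1)] H(1) L(1)
    by (auto intro: subgroups_Inter_pair)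
  ultimately show "composition_step G T (H \<inter> N) (L \<inter> N)"
    unfolding composition_step_def using H(2) L(2) N(2) LN_normal by auto
qed

lemma composition_chain_Int_series:
  assumes S: "composition_series G T U S" and U: "compact_open_subgroup G T U"
    and K: "compact_open_subgroup G T K" and "N \<le> i"
  shows "\<exists>c n. composition_chain G T c n (S N \<inter> K) (S i \<inter> K)"
  using \<open>N \<le> i\<close>
proof (induction rule: dec_induct)
  case base
  then show ?case
    using composition_chain_refl by blast
next
  case (step j)
  then obtain c n where c: "composition_chain G T c n (S N \<inter> K) (S j \<inter> K)"
    by blast
  have members: "subgroup (S m) G \<and> openin T (S m)" for m
    using composition_series_compact_open_members[OF S] U unfolding compact_open_subgroup_def by blast
  have "compact_open_subgroup G T (S j \<inter> K)"
    using compact_open_subgroup_Int[OF K] members by blast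
  then have Sj: "subgroup (S j \<inter> K) G" "compactin T (S j \<inter> K)" "closedin T (S j \<inter> K)"
    using openin_subgroup_imp_closedin unfolding compact_open_subgroup_def by blast+
  have "composition_step G T (S j) (S (Suc j))"
    using S unfolding composition_series_iff by simp
  then have "S (Suc j) \<inter> K \<lhd> G\<lparr>carrier := S j \<inter> K\<rparr>"
    using normal_Int_restrict members K unfolding composition_step_def compact_open_subgroup_def by blast
  moreover have "openin T (S (Suc j) \<inter> K)"
    using members K unfolding compact_open_subgroup_def by blast
  ultimately obtain d m where "composition_chain G T d m (S j \<inter> K) (S (Suc j) \<inter> K)"
    using composition_chain_to_open_normal[OF Sj(2,3,1)] by blast
  then show ?case
    using composition_chain_append[OF c] by blast
qed

end

section \<open>Second countable totally disconnected locally compact groups\<close>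

locale tdlc_grp = topological_grp +
  assumes sc_tdlc_group: "sc_tdlc_group G T"
begin

lemma totally_disconnected: "totally_disconnected_space T"
  and locally_compact: "locally_compact_space T"
  using sc_tdlc_group unfolding sc_tdlc_group_def by simp_all

lemma exists_compact_open_subgroup:
  obtains U where "compact_open_subgroup G T U"
proof -
  have "\<one> \<in> topspace T"
    by simp
  then obtain U where "subgroup U G" "compactin T U" "openin T U"
    using van_dantzig[OF totally_disconnected locally_compact openin_topspace] by blast
  then show ?thesis
    using that unfolding compact_open_subgroup_def by blast
qed

lemma countable_nbhds_of_one:
  obtains B :: "nat \<Rightarrow> 'a set" where "\<And>k. openin T (B k)" "\<And>k. \<one> \<in> B k" "(\<Inter>k. B k) \<subseteq> {\<one>}"
proof -
  have "\<exists>\<B>. countable \<B> \<and> (\<forall>V\<in>\<B>. openin T V) \<and>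
      (\<forall>U x. openin T U \<and> x \<in> U \<longrightarrow> (\<exists>V\<in>\<B>. x \<in> V \<and> V \<subseteq> U))"
    using sc_tdlc_group unfolding sc_tdlc_group_def second_countable_def by simp
  then obtain \<B> where "countable \<B>" "\<forall>V\<in>\<B>. openin T V"
      "\<forall>U x. openin T U \<and> x \<in> U \<longrightarrow> (\<exists>V\<in>\<B>. x \<in> V \<and> V \<subseteq> U)"
    by blast
  then have \<B>: "countable \<B>" "\<And>V. V \<in> \<B> \<Longrightarrow> openin T V"
      "\<And>U x. openin T U \<Longrightarrow> x \<in> U \<Longrightarrow> \<exists>V\<in>\<B>. x \<in> V \<and> V \<subseteq> U"
    by auto
  define \<B>\<^sub>1 where "\<B>\<^sub>1 = {V \<in> \<B>. \<one> \<in> V}"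
  have "\<B>\<^sub>1 \<noteq> {}"
    using \<B>(3)[OF openin_topspace, of \<one>] unfolding \<B>\<^sub>1_def by auto
  have "g \<notin> \<Inter>\<B>\<^sub>1" if g: "g \<noteq> \<one>" for g
  proof (cases "g \<in> topspace T")
    case True
    then obtain U where "openin T U" "\<one> \<in> U" "g \<notin> U"
      using t1_space_if_totally_disconnected[OF totally_disconnected, unfolded t1_space_def,
          rule_format, of \<one> g] g by auto
    moreover obtain V where "V \<in> \<B>" "\<one> \<in> V" "V \<subseteq> U"
      using \<B>(3)[OF \<open>openin T U\<close> \<open>\<one> \<in> U\<close>] by blast
    ultimately show ?thesis
      unfolding \<B>\<^sub>1_def by blast
  next
    case False
    obtain V where "V \<in> \<B>\<^sub>1"
      using \<open>\<B>\<^sub>1 \<noteq> {}\<close> by blast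
    then have "g \<notin> V"
      using False openin_subset[OF \<B>(2)] unfolding \<B>\<^sub>1_def by blast
    then show ?thesis
      using \<open>V \<in> \<B>\<^sub>1\<close> by blast
  qed
  moreover have "(\<Inter>k. from_nat_into \<B>\<^sub>1 k) = \<Inter>\<B>\<^sub>1"
    using \<B>(1) \<open>\<B>\<^sub>1 \<noteq> {}\<close> unfolding \<B>\<^sub>1_def by (simp add: range_from_nat_into)
  ultimately have "(\<Inter>k. from_nat_into \<B>\<^sub>1 k) \<subseteq> {\<one>}"
    by blast
  moreover have "from_nat_into \<B>\<^sub>1 k \<in> \<B>\<^sub>1" for k
    using from_nat_into[OF \<open>\<B>\<^sub>1 \<noteq> {}\<close>] .
  then have "openin T (from_nat_into \<B>\<^sub>1 k)" "\<one> \<in> from_nat_into \<B>\<^sub>1 k" for k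
    using \<B>(2) unfolding \<B>\<^sub>1_def by auto
  ultimately show ?thesis
    using that by blast
qed

lemma chain_sequence_to_trivial:
  assumes U: "compact_open_subgroup G T U"
    and step: "\<And>H V. compact_open_subgroup G T H \<Longrightarrow> openin T V \<Longrightarrow> \<one> \<in> V \<Longrightarrow>
      \<exists>K c n. compact_open_subgroup G T K \<and> K \<subseteq> V \<and> composition_chain G T c n H K \<and> P c n"
  obtains W ch len where "W 0 = U" "\<And>k. composition_chain G T (ch k) (len k) (W k) (W (Suc k))"
    "\<And>k. P (ch k) (len k)" "(\<Inter>k. W k) \<subseteq> {\<one>}"
proof -
  obtain B :: "nat \<Rightarrow> 'a set" where B: "\<And>k. openin T (B k)" "\<And>k. \<one> \<in> B k" "(\<Inter>k. B k) \<subseteq> {\<one>}"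
    using countable_nbhds_of_one by blast
  have "\<exists>W. \<forall>k. (compact_open_subgroup G T (W k) \<and> (k = 0 \<longrightarrow> W k = U))
      \<and> W (Suc k) \<subseteq> B k \<and> (\<exists>c n. composition_chain G T c n (W k) (W (Suc k)) \<and> P c n)"
  proof (rule dependent_nat_choice)
    show "\<exists>H. compact_open_subgroup G T H \<and> (0 = 0 \<longrightarrow> H = U)"
      using U by blast
    fix H and k :: nat
    assume "compact_open_subgroup G T H \<and> (k = 0 \<longrightarrow> H = U)"
    then obtain K c n where "compact_open_subgroup G T K" "K \<subseteq> B k" "composition_chain G T c n H K" "P c n"
      using step[OF _ B(1,2)] by blast
    then show "\<exists>K. (compact_open_subgroup G T K \<and> (Suc k = 0 \<longrightarrow> K = U))
        \<and> K \<subseteq> B k \<and> (\<exists>c n. composition_chain G T c n H K \<and> P c n)"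
      by blast
  qed
  then obtain W where W_all: "\<forall>k. (compact_open_subgroup G T (W k) \<and> (k = 0 \<longrightarrow> W k = U))
      \<and> W (Suc k) \<subseteq> B k \<and> (\<exists>c n. composition_chain G T c n (W k) (W (Suc k)) \<and> P c n)" ..
  then have W: "W 0 = U" "\<And>k. W (Suc k) \<subseteq> B k"
    by simp_all
  have "\<forall>k. \<exists>p. composition_chain G T (fst p) (snd p) (W k) (W (Suc k)) \<and> P (fst p) (snd p)"
    using W_all by simp
  then have "\<exists>p. \<forall>k. composition_chain G T (fst (p k)) (snd (p k)) (W k) (W (Suc k)) \<and> P (fst (p k)) (snd (p k))"
    by (rule choice)
  then obtain p where p: "\<forall>k. composition_chain G T (fst (p k)) (snd (p k)) (W k) (W (Suc k))
      \<and> P (fst (p k)) (snd (p k))" ..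
  have "(\<Inter>k. W k) \<subseteq> (\<Inter>k. W (Suc k))"
    by blast
  also have "\<dots> \<subseteq> (\<Inter>k. B k)"
    using W(2) by blast
  finally have "(\<Inter>k. W k) \<subseteq> {\<one>}"
    using B(3) by simp
  then show ?thesis
    using that[of W "\<lambda>k. fst (p k)" "\<lambda>k. snd (p k)"] W(1) p by blast
qed

lemma exists_open_normal_subgroup_in:
  assumes H: "compact_open_subgroup G T H" and V: "openin T V" "\<one> \<in> V"
  obtains K where "K \<lhd> G\<lparr>carrier := H\<rparr>" "compact_open_subgroup G T K" "K \<subseteq> V"
proof -
  have H_sub: "subgroup H G" and H_comp: "compactin T H" and H_open: "openin T H"
    using H unfolding compact_open_subgroup_def by auto
  have "openin T (V \<inter> H)" "\<one> \<in> V \<inter> H"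
    using V H_open subgroup.one_closed[OF H_sub] by auto
  then obtain L where L: "subgroup L G" "openin T L" "L \<subseteq> V \<inter> H"
    using van_dantzig[OF totally_disconnected locally_compact] by blast
  define K where "K = normal_core G H L"
  have K_normal: "K \<lhd> G\<lparr>carrier := H\<rparr>"
    unfolding K_def using normal_core_normal[OF H_sub L(1)] L(3) by simp
  have K_open: "openin T K"
    unfolding K_def using openin_normal_core[OF H_comp H_sub L(1,2)] L(3) by simp
  have "K \<subseteq> L"
    unfolding K_def using normal_core_subset[OF subgroup.one_closed[OF H_sub]] .
  have "compact_open_subgroup G T K"
    using compact_open_subgroup_if_open_normal[OF H K_normal K_open] .
  then show ?thesis
    using that K_normal \<open>K \<subseteq> L\<close> L(3) by blast
qed

lemma exists_nontrivial_chain_into: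
  assumes H: "compact_open_subgroup G T H" and V: "openin T V" "\<one> \<in> V"
  shows "\<exists>K c n. compact_open_subgroup G T K \<and> K \<subseteq> V \<and> composition_chain G T c n H K \<and> n \<ge> 1"
proof -
  have H_sub: "subgroup H G" and H_comp: "compactin T H" and H_open: "openin T H"
    using H unfolding compact_open_subgroup_def by auto
  have H_closed: "closedin T H"
    using openin_subgroup_imp_closedin[OF H_sub H_open] .
  show ?thesis
  proof (cases "H = {\<one>}")
    case True
    have "H \<lhd> G\<lparr>carrier := H\<rparr>"
      using group.one_is_normal[OF subgroup_imp_group[OF H_sub]] True by simp
    then have "composition_step G T H H"
      using True H_sub H_closed unfolding composition_step_def by simp
    then have "composition_chain G T (\<lambda>i. if i = 0 then H else H) 1 H H"
      by (rule composition_chain_single)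
    moreover have "H \<subseteq> V"
      using True V(2) by simp
    ultimately show ?thesis
      using H by blast
  next
    case False
    then obtain g where g: "g \<in> H" "g \<noteq> \<one>"
      using subgroup.one_closed[OF H_sub] by blast
    obtain V' where V': "openin T V'" "\<one> \<in> V'" "g \<notin> V'"
      using t1_space_if_totally_disconnected[OF totally_disconnected, unfolded t1_space_def,
          rule_format, of \<one> g] g subgroup.mem_carrier[OF H_sub] by auto
    obtain K where K: "K \<lhd> G\<lparr>carrier := H\<rparr>" "compact_open_subgroup G T K" "K \<subseteq> V \<inter> V'"
      using exists_open_normal_subgroup_in[OF H openin_Int[OF V(1) V'(1)]] V(2) V'(2) by blast
    obtain c n where c: "composition_chain G T c n H K"
      using composition_chain_to_open_normal[OF H_comp H_closed H_sub _ K(1)] K(2)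
      unfolding compact_open_subgroup_def by blast
    have "K \<noteq> H"
      using g V'(3) K(3) by blast
    then have "n \<ge> 1"
      using c unfolding composition_chain_def by (cases n) auto
    then show ?thesis
      using c K(2,3) by blast
  qed
qed

lemma exists_composition_series:
  assumes "compact_open_subgroup G T U"
  obtains S where "composition_series G T U S"
proof -
  obtain W ch len where W: "W 0 = U" "\<And>k. composition_chain G T (ch k) (len k) (W k) (W (Suc k))"
    "\<And>k. len k \<ge> 1" "(\<Inter>k. W k) \<subseteq> {\<one>}"
    using chain_sequence_to_trivial[where P = "\<lambda>c n. n \<ge> 1", OF assms exists_nontrivial_chain_into]
    by blast
  obtain S where "composition_series G T (W 0) S"
    using composition_series_concat[OF W(2,3,4)] by blast
  then show ?thesis
    using W(1) that by blast
qed

lemma chain_with_factor_into: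
  assumes local: "in_local_simple_content G T A" and H: "compact_open_subgroup G T H"
    and V: "openin T V" "\<one> \<in> V"
  shows "\<exists>K c n. compact_open_subgroup G T K \<and> K \<subseteq> V \<and> composition_chain G T c n H K
    \<and> (\<exists>j<n. j \<in> factor_indices G c A)"
proof -
  have H_sub: "subgroup H G" and H_comp: "compactin T H" and H_open: "openin T H"
    using H unfolding compact_open_subgroup_def by auto
  obtain R where R: "composition_series G T H R" and "factor_indices G R A \<noteq> {}"
    using local H unfolding in_local_simple_content_def composition_factor_def by blast
  then obtain j where j: "j \<in> factor_indices G R A"
    by blast
  have R_members: "subgroup (R i) G \<and> compactin T (R i) \<and> openin T (R i)" for i
    using composition_series_compact_open_members[OF R H_sub H_comp H_open] .
  have "decseq R"
    using composition_series_decseq[OF R] .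
  moreover have "R 0 \<subseteq> H" "(\<Inter>i. R i) \<subseteq> V"
    using R V(2) unfolding composition_series_iff by auto
  moreover have "closedin T (R i)" for i
    using R unfolding composition_series_def by blast
  ultimately obtain m0 where "R m0 \<subseteq> V"
    using compactin_decreasing_imp_eventually_subset[OF H_comp _ _ _ V(1)] by blast
  define m where "m = max m0 (Suc j)"
  have "R m \<subseteq> V"
    using \<open>R m0 \<subseteq> V\<close> decseqD[OF \<open>decseq R\<close>, of m0 m] unfolding m_def by simp
  moreover have "composition_chain G T R m H (R m)"
    using R unfolding composition_chain_def composition_series_iff by simp
  moreover have "compact_open_subgroup G T (R m)"
    unfolding compact_open_subgroup_def using R_members by simp
  moreover have "j < m"
    unfolding m_def by simp
  ultimately show ?thesis
    using j by blast
qed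

lemma composition_factor_inf_mult_if_local:
  assumes "in_local_simple_content G T A" and "compact_open_subgroup G T U"
  shows "composition_factor_inf_mult G T U A"
proof -
  obtain W ch len where W: "W 0 = U" "\<And>k. composition_chain G T (ch k) (len k) (W k) (W (Suc k))"
    "\<And>k. \<exists>j<len k. j \<in> factor_indices G (ch k) A" "(\<Inter>k. W k) \<subseteq> {\<one>}"
    using chain_sequence_to_trivial[where P = "\<lambda>c n. \<exists>j<n. j \<in> factor_indices G c A",
        OF assms(2) chain_with_factor_into[OF assms(1)]] by blast
  then show ?thesis
    using composition_factor_inf_mult_concat[OF W(2,3,4)] by simp
qed

lemma composition_factor_if_chain_to_step:
  assumes c: "composition_chain G T c n V H" and step: "composition_step G T H L"
    and "H \<noteq> {\<one>}" "G\<lparr>carrier := H\<rparr> Mod L \<cong> A" and L: "compact_open_subgroup G T L"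
  shows "composition_factor G T V A"
proof -
  obtain R where R: "composition_series G T L R"
    using exists_composition_series[OF L] by blast
  define R' where "R' = chain_append (\<lambda>i. if i = 0 then H else L) 1 R"
  have "composition_series G T H R'"
    unfolding R'_def using composition_series_append[OF composition_chain_single[OF step] R] .
  then have "composition_series G T V (chain_append c n R')"
    by (rule composition_series_append[OF c])
  moreover have "0 \<in> factor_indices G R' A"
    unfolding R'_def factor_indices_def using assms(3,4) by simp
  then have "n + 0 \<in> factor_indices G (chain_append c n R') A"
    using c by (intro factor_indices_chain_append) (simp_all add: R'_def composition_chain_def)
  ultimately show ?thesis
    unfolding composition_factor_def by blast
qed

lemma composition_factor_if_Int_step:
  assumes S: "composition_series G T U S" and U: "compact_open_subgroup G T U"
    and V: "compact_open_subgroup G T V" and K: "K \<lhd> G\<lparr>carrier := V\<rparr>" "openin T K" "K \<subseteq> S N"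
    and i: "i \<in> factor_indices G S A" "N \<le> i" "S i \<subseteq> V" "\<not> S i \<inter> K \<subseteq> S (Suc i)"
  shows "composition_factor G T V A"
proof -
  have V_sub: "subgroup V G" "compactin T V" "openin T V"
    using V unfolding compact_open_subgroup_def by auto
  have K_co: "compact_open_subgroup G T K"
    using compact_open_subgroup_if_open_normal[OF V K(1,2)] .
  have step: "composition_step G T (S i) (S (Suc i))"
    using S unfolding composition_series_iff by simp
  have nontriv: "S i \<noteq> {\<one>}" and iso: "G\<lparr>carrier := S i\<rparr> Mod S (Suc i) \<cong> A"
    using i(1) unfolding factor_indices_def by auto
  have K_closed: "closedin T K"
    using openin_subgroup_imp_closedin K_co unfolding compact_open_subgroup_def by blast
  note Int_step = composition_step_Int_normal[OF step nontriv V_sub(1) i(3) K(1) K_closed i(4)]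
  have "S i \<inter> K \<noteq> {\<one>}"
  proof
    assume "S i \<inter> K = {\<one>}"
    moreover have "composition_step G T (S (Suc i)) (S (Suc (Suc i)))"
      using S unfolding composition_series_iff by simp
    ultimately have "S i \<inter> K \<subseteq> S (Suc i)"
      using composition_step_one_closed by simp
    then show False
      using i(4) by blast
  qed
  obtain c n where "composition_chain G T c n V K"
    using composition_chain_to_open_normal[OF V_sub(2) openin_subgroup_imp_closedin[OF V_sub(1,3)]
        V_sub(1) K(2,1)] by blast
  moreover have "S N \<inter> K = K"
    using K(3) by blast
  then obtain d m where "composition_chain G T d m K (S i \<inter> K)"
    using composition_chain_Int_series[OF S U K_co i(2)] by auto
  ultimately have chain: "composition_chain G T (chain_append c n d) (n + m) V (S i \<inter> K)"
    by (rule composition_chain_append)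
  have "compact_open_subgroup G T (S (Suc i) \<inter> K)"
    using compact_open_subgroup_Int[OF K_co] composition_series_compact_open_members[OF S] U
    unfolding compact_open_subgroup_def by blast
  then show ?thesis
    using composition_factor_if_chain_to_step[OF chain Int_step(1) \<open>S i \<inter> K \<noteq> {\<one>}\<close>
        iso_trans[OF Int_step(2) iso]] by blast
qed

lemma composition_factor_if_inf_mult:
  assumes U: "compact_open_subgroup G T U" and inf: "composition_factor_inf_mult G T U A"
    and V: "compact_open_subgroup G T V"
  shows "composition_factor G T V A"
proof -
  obtain S where S: "composition_series G T U S" and infS: "infinite (factor_indices G S A)"
    using inf unfolding composition_factor_inf_mult_def by blast
  have U_sub: "subgroup U G" "compactin T U" "openin T U"
    and V_sub: "subgroup V G" "compactin T V" "openin T V"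
    using U V unfolding compact_open_subgroup_def by auto
  have members: "subgroup (S i) G \<and> openin T (S i)" for i
    using composition_series_compact_open_members[OF S U_sub] by blast
  have "decseq S"
    using composition_series_decseq[OF S] .
  have "(\<Inter>i. S i) \<subseteq> U \<inter> V" "S 0 \<subseteq> U" "closedin T (S i)" for i
    using S subgroup.one_closed[OF U_sub(1)] subgroup.one_closed[OF V_sub(1)]
    unfolding composition_series_def by auto
  then obtain N where "S N \<subseteq> U \<inter> V"
    using compactin_decreasing_imp_eventually_subset[OF U_sub(2) _ \<open>decseq S\<close> _ openin_Int[OF U_sub(3) V_sub(3)]]
    by blast
  then have S_V: "S i \<subseteq> V" if "N \<le> i" for i
    using decseqD[OF \<open>decseq S\<close> that] by blast
  define K where "K = normal_core G V (S N)"
  have K: "K \<lhd> G\<lparr>carrier := V\<rparr>" "openin T K" "K \<subseteq> S N"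
    unfolding K_def using normal_core_normal[OF V_sub(1)] openin_normal_core[OF V_sub(2,1)]
      normal_core_subset[OF subgroup.one_closed[OF V_sub(1)]] members S_V[of N] by auto
  have K_sub: "subgroup K G"
    using subgroup_of_subgroup[OF normal_imp_subgroup[OF K(1)] V_sub(1)] .
  have S_sub: "subgroup (S i) G" for i
    using members by blast
  have proper: "S i \<noteq> S (Suc i)" if "i \<in> factor_indices G S A" for i
    using factor_index_proper_step[OF S that] .
  obtain i where i: "i \<in> factor_indices G S A" "N \<le> i" "\<not> S i \<inter> K \<subseteq> S (Suc i)"
    using exists_step_seen_by_subgroup[OF finite_l_cosets_of_open_subgroup[OF V_sub(2,1) K_sub K(2)
          normal_subset_carrier[OF K(1)]] K_sub S_sub \<open>decseq S\<close> S_V[OF order_refl] infS proper] .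
  show ?thesis
    using composition_factor_if_Int_step[OF S U V K i(1,2) S_V[OF i(2)] i(3)] .
qed

end

theorem lemma5p4:
  fixes G :: "'a monoid" and T :: "'a topology" and A :: "'b monoid"
  assumes "sc_tdlc_group G T"
    and "simple_group A" and "finite (carrier A)"
  shows "(in_local_simple_content G T A
            \<longleftrightarrow> (\<exists>U. compact_open_subgroup G T U \<and> composition_factor_inf_mult G T U A))
       \<and> ((\<exists>U. compact_open_subgroup G T U \<and> composition_factor_inf_mult G T U A)
            \<longleftrightarrow> (\<forall>U. compact_open_subgroup G T U \<longrightarrow> composition_factor_inf_mult G T U A))"
proof -
  have "topological_group G T"
    using assms(1) unfolding sc_tdlc_group_def by simp
  then interpret tdlc_grp G T
    unfolding tdlc_grp_def tdlc_grp_axioms_def topological_grp_def topological_grp_axioms_def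
    using assms(1) by (simp add: topological_group_def)
  obtain U0 where U0: "compact_open_subgroup G T U0"
    using exists_compact_open_subgroup .
  have "in_local_simple_content G T A \<Longrightarrow> compact_open_subgroup G T U \<Longrightarrow>
      composition_factor_inf_mult G T U A" for U
    by (rule composition_factor_inf_mult_if_local)
  moreover have "compact_open_subgroup G T U \<Longrightarrow> composition_factor_inf_mult G T U A \<Longrightarrow>
      in_local_simple_content G T A" for U
    unfolding in_local_simple_content_def using composition_factor_if_inf_mult by blast
  ultimately show ?thesis
    using U0 by blast
qed

end
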